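(* For SONATA for time-varying digraphs with step-size $\alpha\in(0,1]$ under Assumptions (A), (B'), (C), (E), for all $\nu\ge0$: $$\|d^\nu\|^2\le\frac6{\mu\,\phi_{lb}}\Big(\Big(\frac{D_{\max}}{\tilde\mu_{\min}}+1\Big)^2+\frac{4L_{\max}^2}{\tilde\mu_{\min}^2}\Big)p_\phi^\nu+\frac3{\tilde\mu_{\min}^2}\|y_{\phi,\perp}^\nu\|^2.$$
   Context: Problem (P): minimize $U=F+G$ over $\mathcal K$, $F=\frac1m\sum_{i=1}^mf_i$. (A): $\mathcal K\subseteq\mathbb R^d$ nonempty closed convex; $f_i$ twice differentiable convex on open $\mathcal O\supseteq\mathcal K$; $\mu I\preceq\nabla^2F\preceq LI$ on $\mathcal K$ ($\mu>0$, $L<\infty$); $G$ convex on $\mathcal K$; $U^\star$ optimal value. $\nabla^2f_i\preceq L_iI$ on $\mathcal K$, $L_{\max}=\max L_i$. (B'): digraphs $\mathcal G^\nu=(\{1,\dots,m\},\mathcal E^\nu)$; some integer $B>0$ makes the graph with edge set $\bigcup_{t=\nu B}^{(\nu+1)B-1}\mathcal E^t$ strongly connected for all $\nu\ge0$. (E): some $c_\ell>0$ with $c^\nu_{ii}\ge c_\ell$, $c^\nu_{ij}\ge c_\ell$ if $(j,i)\in\mathcal E^\nu$, $c^\nu_{ij}=0$ otherwise, $\mathbf1^\top C^\nu=\mathbf1^\top$. (C): $\tilde f_i:\mathcal O\times\mathcal O\to\mathbb R$ $C^2$, $\nabla\tilde f_i(x;x)=\nabla f_i(x)$, $\nabla\tilde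 f_i(\cdot;x)$ $\tilde L_i$-Lipschitz, $\tilde f_i(\cdot;x)$ $\tilde\mu_i$-strongly convex on $\mathcal K$ for $x\in\mathcal K$; constants $D_i^\ell\le D_i^u$ with $D_i^\ell I\preceq\nabla^2\tilde f_i(x;y)-\nabla^2F(x)\preceq D_i^uI$ on $\mathcal K\times\mathcal K$; $D_{\max}=\max_i\max\{|D_i^\ell|,|D_i^u|\}$, $\tilde\mu_{\min}=\min\tilde\mu_i$. Algorithm: $x_i^0\in\mathcal K$, $y_i^0=\nabla f_i(x_i^0)$, $\phi_i^0=1$; $\hat x_i^\nu=\arg\min_{x_i\in\mathcal K}\tilde f_i(x_i;x_i^\nu)+(y_i^\nu-\nabla f_i(x_i^\nu))^\top(x_i-x_i^\nu)+G(x_i)$; $d_i^\nu=\hat x_i^\nu-x_i^\nu$; $x_i^{\nu+1/2}=x_i^\nu+\alpha d_i^\nu$; $\phi_i^{\nu+1}=\sum_jc^\nu_{ij}\phi_j^\nu$; $x_i^{\nu+1}=\frac1{\phi_i^{\nu+1}}\sum_jc^\nu_{ij}\phi_j^\nu x_j^{\nu+1/2}$; $y_i^{\nu+1}=\frac1{\phi_i^{\nu+1}}\sum_jc^\nu_{ij}(\phi_j^\nu y_j^\nu+\nabla f_j(x_j^{\nu+1})-\nabla f_j(x_j^\nu))$. Notation: $d^\nu,y^\nu$ stack local vectors; $y_{\phi,\perp}^\nu=y^\nu-\mathbf1_m\otimes\frac1m\sum_i\phi_i^\nu y_i^\nu$; $p_\phi^\nu=\sum_i\phi_i^\nu(U(x_i^\nu)-U^\star)$;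 $\phi_{lb}=c_\ell^{2(m-1)B}$. *)

theory Defs
  imports "HOL-Analysis.Analysis"
begin

definition strongly_convex_on :: "'a::real_normed_vector set \<Rightarrow> real \<Rightarrow> ('a \<Rightarrow> real) \<Rightarrow> bool" where
  "strongly_convex_on S mu g \<longleftrightarrow>
     (\<forall>x\<in>S. \<forall>y\<in>S. \<forall>t::real. 0 \<le> t \<and> t \<le> 1 \<longrightarrow>
        g ((1 - t) *\<^sub>R x + t *\<^sub>R y) \<le> (1 - t) * g x + t * g y - mu / 2 * t * (1 - t) * (norm (x - y))\<^sup>2)"

definition C2_on :: "'a::euclidean_space set \<Rightarrow> ('a \<Rightarrow> real) \<Rightarrow> bool" where
  "C2_on S g \<longleftrightarrow>
     (\<exists>(g' :: 'a \<Rightarrow> 'a \<Rightarrow>\<^sub>L real) (g'' :: 'a \<Rightarrow> 'a \<Rightarrow>\<^sub>L ('a \<Rightarrow>\<^sub>L real)).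
        (\<forall>z\<in>S. (g has_derivative blinfun_apply (g' z)) (at z)
              \<and> (g' has_derivative blinfun_apply (g'' z)) (at z))
        \<and> continuous_on S g'')"

text \<open>Strong connectivity of the digraph on vertices {0..<m} with edge set E
  (an edge (j,i) goes from j to i).\<close>
definition strongly_connected_on :: "nat \<Rightarrow> (nat \<times> nat) set \<Rightarrow> bool" where
  "strongly_connected_on m E \<longleftrightarrow>
     (\<forall>i<m. \<forall>j<m. (i, j) \<in> (E \<inter> ({..<m} \<times> {..<m}))\<^sup>*)"

end

theory Submission
  imports Defs
begin

(* Let xstar be the limit of a minimizing sequence of U = F + G over K.  Strong convexity of F
   makes U grow quadratically away from it: mu/2 |x - xstar|^2 <= U x - U*.  For agent i, the
   mut_i-strongly convex surrogate, compared at its minimizer xhat_i and at xstar, gives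
   mut_i |xhat_i - xstar| <= |grad ft_i(xstar; x_i) + y_i - grad f_i(x_i) - grad F(xstar)|.
   Inserting x_i, the Hessian mismatch bounds D contribute D_max |x_i - xstar|; the tracking
   invariant sum_j phi_j y_j = sum_j grad f_j(x_j) splits off the tracking error |y_i - ybar|
   and leaves a gradient difference of size L_max (|x_i - xstar| + mean_j |x_j - xstar|).
   Squaring and summing, it remains to trade sum_i |x_i - xstar|^2 for the weighted gap p_phi:
   the push-sum weights stay above phi_lb = cl^(2(m-1)B), because in every window of B steps
   strong connectivity lets one more agent inherit a fraction cl^B of a large weight. *)

section \<open>Symmetry of second derivatives\<close>

lemma has_derivative_along_line:
  assumes "(f has_derivative f') (at (x + s *\<^sub>R v))"
  shows "((\<lambda>t. f (x + t *\<^sub>R v)) has_derivative (\<lambda>t. t *\<^sub>R f' v)) (at s)"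
proof -
  interpret bounded_linear f' using assms by (rule has_derivative_bounded_linear)
  have "((\<lambda>t. x + t *\<^sub>R v) has_derivative (\<lambda>t. t *\<^sub>R v)) (at s)"
    by (auto intro!: derivative_eq_intros)
  from has_derivative_compose[OF this assms] show ?thesis by (simp add: scaleR)
qed

lemma has_real_derivative_along_line:
  fixes g :: "'a::real_inner \<Rightarrow> real"
  assumes "(g has_derivative (\<lambda>h. gr \<bullet> h)) (at x)"
  shows "((\<lambda>t. g (x + t *\<^sub>R v)) has_real_derivative gr \<bullet> v) (at 0)"
proof -
  have "((\<lambda>t. g (x + t *\<^sub>R v)) has_derivative (\<lambda>t. t *\<^sub>R (gr \<bullet> v))) (at 0)"
    using has_derivative_along_line[of g _ x 0 v] assms by simp
  then show ?thesis by (rule has_derivative_imp_has_field_derivative) simp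
qed

lemma right_difference_quotient_tendsto:
  fixes \<phi> :: "real \<Rightarrow> real"
  assumes "(\<phi> has_real_derivative D) (at 0)"
  shows "((\<lambda>t. (\<phi> t - \<phi> 0) / t) \<longlongrightarrow> D) (at_right 0)"
  using assms unfolding has_field_derivative_iff by (auto intro: tendsto_mono at_le)

lemma norm_scaleR_add_le:
  assumes "0 \<le> a" "a \<le> t" "0 \<le> s" "s \<le> t"
  shows "norm (a *\<^sub>R u + s *\<^sub>R v) \<le> t * (norm u + norm v)"
proof -
  have "norm (a *\<^sub>R u + s *\<^sub>R v) \<le> a * norm u + s * norm v"
    using assms norm_triangle_ineq[of "a *\<^sub>R u" "s *\<^sub>R v"] by simp
  also have "\<dots> \<le> t * (norm u + norm v)"
    using assms by (simp add: distrib_left add_mono mult_right_mono)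
  finally show ?thesis .
qed

lemma second_difference_mean_value:
  fixes g :: "'a::real_inner \<Rightarrow> real"
  assumes dg: "\<And>z. z \<in> S \<Longrightarrow> (g has_derivative (\<lambda>h. gr z \<bullet> h)) (at z)"
    and S: "ball x r \<subseteq> S" and t: "0 < t" "t * (norm u + norm v) < r"
  obtains \<xi> where "0 < \<xi>" "\<xi> < t"
    "g (x + t *\<^sub>R u + t *\<^sub>R v) - g (x + t *\<^sub>R u) - g (x + t *\<^sub>R v) + g x
       = t * ((gr (x + t *\<^sub>R u + \<xi> *\<^sub>R v) - gr (x + \<xi> *\<^sub>R v)) \<bullet> v)"
proof -
  have in_ball: "x + (a *\<^sub>R u + s *\<^sub>R v) \<in> S" if "0 \<le> a" "a \<le> t" "0 \<le> s" "s \<le> t" for a s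
    using norm_scaleR_add_le[OF that, of u v] t(2) norm_minus_cancel[of "a *\<^sub>R u + s *\<^sub>R v"]
    by (auto simp: dist_norm intro!: subsetD[OF S])
  have inS: "x + s *\<^sub>R v \<in> S \<and> x + t *\<^sub>R u + s *\<^sub>R v \<in> S" if "0 \<le> s" "s \<le> t" for s
    using in_ball[of 0 s] in_ball[of t s] that t(1) by (simp add: add.assoc)
  define \<phi> where "\<phi> s = g (x + t *\<^sub>R u + s *\<^sub>R v) - g (x + s *\<^sub>R v)" for s
  have der: "(\<phi> has_derivative (\<lambda>h. h * ((gr (x + t *\<^sub>R u + s *\<^sub>R v) - gr (x + s *\<^sub>R v)) \<bullet> v)))
          (at s within {0..t})" if "0 \<le> s" "s \<le> t" for s
  proof -
    have "((\<lambda>s. g (x + t *\<^sub>R u + s *\<^sub>R v)) has_derivative (\<lambda>h. h * (gr (x + t *\<^sub>R u + s *\<^sub>R v) \<bullet> v))) (at s)"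
      using has_derivative_along_line[of g _ "x + t *\<^sub>R u" s v] dg inS[OF that] by simp
    moreover have "((\<lambda>s. g (x + s *\<^sub>R v)) has_derivative (\<lambda>h. h * (gr (x + s *\<^sub>R v) \<bullet> v))) (at s)"
      using has_derivative_along_line[of g _ x s v] dg inS[OF that] by simp
    ultimately have "(\<phi> has_derivative (\<lambda>h. h * (gr (x + t *\<^sub>R u + s *\<^sub>R v) \<bullet> v) - h * (gr (x + s *\<^sub>R v) \<bullet> v))) (at s)"
      unfolding \<phi>_def by (rule has_derivative_diff)
    then show ?thesis
      by (rule has_derivative_at_withinI[OF has_derivative_eq_rhs]) (simp add: fun_eq_iff algebra_simps inner_diff_left)
  qed
  then obtain \<xi> where "\<xi> \<in> {0<..<t}"
      "\<phi> t - \<phi> 0 = (t - 0) * ((gr (x + t *\<^sub>R u + \<xi> *\<^sub>R v) - gr (x + \<xi> *\<^sub>R v)) \<bullet> v)"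
    using mvt_simple[OF t(1), of \<phi>, OF der] by auto
  moreover have "\<phi> t - \<phi> 0 = g (x + t *\<^sub>R u + t *\<^sub>R v) - g (x + t *\<^sub>R u) - g (x + t *\<^sub>R v) + g x"
    by (simp add: \<phi>_def)
  ultimately show ?thesis by (intro that[of \<xi>]) auto
qed

lemma has_derivative_increment_bound:
  fixes gr :: "'a::real_normed_vector \<Rightarrow> 'b::real_normed_vector"
  assumes dH: "(gr has_derivative H) (at x)" and \<eta>: "0 < \<eta>"
  obtains d where "0 < d" "\<And>a b :: 'a. norm a < d \<Longrightarrow> norm b < d \<Longrightarrow>
    norm (gr (x + a) - gr (x + b) - H (a - b)) \<le> \<eta> * (norm a + norm b)"
proof -
  interpret H: bounded_linear H using dH by (rule has_derivative_bounded_linear)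
  obtain d where d: "0 < d"
    "\<And>y. norm (y - x) < d \<Longrightarrow> norm (gr y - gr x - H (y - x)) \<le> \<eta> * norm (y - x)"
    using dH \<eta> unfolding has_derivative_at_alt by blast
  show ?thesis
  proof (rule that[OF d(1)])
    fix a b :: 'a assume "norm a < d" "norm b < d"
    then have "norm (gr (x + a) - gr x - H a) \<le> \<eta> * norm a" "norm (gr (x + b) - gr x - H b) \<le> \<eta> * norm b"
      using d(2)[of "x + a"] d(2)[of "x + b"] by simp_all
    moreover have "gr (x + a) - gr (x + b) - H (a - b) = (gr (x + a) - gr x - H a) - (gr (x + b) - gr x - H b)"
      by (simp add: H.diff)
    then have "norm (gr (x + a) - gr (x + b) - H (a - b))
        \<le> norm (gr (x + a) - gr x - H a) + norm (gr (x + b) - gr x - H b)"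
      by (metis norm_triangle_ineq4)
    ultimately show "norm (gr (x + a) - gr (x + b) - H (a - b)) \<le> \<eta> * (norm a + norm b)"
      by (simp add: distrib_left)
  qed
qed

lemma second_difference_approx:
  fixes g :: "'a::real_inner \<Rightarrow> real"
  assumes S: "open S" "x \<in> S"
    and dg: "\<And>z. z \<in> S \<Longrightarrow> (g has_derivative (\<lambda>h. gr z \<bullet> h)) (at z)"
    and dH: "(gr has_derivative H) (at x)" and \<eta>: "0 < \<eta>"
  obtains \<delta> where "0 < \<delta>" "\<And>t. 0 < t \<Longrightarrow> t < \<delta> \<Longrightarrow>
     \<bar>g (x + t *\<^sub>R u + t *\<^sub>R v) - g (x + t *\<^sub>R u) - g (x + t *\<^sub>R v) + g x - t\<^sup>2 * (H u \<bullet> v)\<bar>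
       \<le> \<eta> * t\<^sup>2 * ((norm u + 2 * norm v) * norm v)"
proof -
  interpret H: bounded_linear H using dH by (rule has_derivative_bounded_linear)
  obtain d where d: "0 < d" "\<And>a b. norm a < d \<Longrightarrow> norm b < d \<Longrightarrow>
      norm (gr (x + a) - gr (x + b) - H (a - b)) \<le> \<eta> * (norm a + norm b)"
    using has_derivative_increment_bound[OF dH \<eta>] by blast
  obtain r where r: "0 < r" "ball x r \<subseteq> S" using S open_contains_ball by blast
  define \<delta> where "\<delta> = min d r / (norm u + norm v + 1)"
  have nuv: "0 < norm u + norm v + 1" by (simp add: add_nonneg_pos)
  show ?thesis
  proof (rule that)
    show "0 < \<delta>" using d r nuv unfolding \<delta>_def by simp
    fix t :: real assume t: "0 < t" "t < \<delta>"
    have "t * (norm u + norm v) < \<delta> * (norm u + norm v + 1)"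
      using t by (intro mult_strict_mono') auto
    then have tuv: "t * (norm u + norm v) < min d r" unfolding \<delta>_def using nuv by simp
    then obtain \<xi> where \<xi>: "0 < \<xi>" "\<xi> < t" and mv:
        "g (x + t *\<^sub>R u + t *\<^sub>R v) - g (x + t *\<^sub>R u) - g (x + t *\<^sub>R v) + g x
           = t * ((gr (x + t *\<^sub>R u + \<xi> *\<^sub>R v) - gr (x + \<xi> *\<^sub>R v)) \<bullet> v)"
      using second_difference_mean_value[where S=S and g=g and gr=gr, OF dg r(2) t(1)] by auto
    define e where "e = gr (x + (t *\<^sub>R u + \<xi> *\<^sub>R v)) - gr (x + \<xi> *\<^sub>R v) - H (t *\<^sub>R u + \<xi> *\<^sub>R v - \<xi> *\<^sub>R v)"
    have "norm e \<le> \<eta> * (t * norm u + \<xi> * norm v + \<xi> * norm v)"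
      using d(2)[of "t *\<^sub>R u + \<xi> *\<^sub>R v" "\<xi> *\<^sub>R v"] norm_scaleR_add_le[of t t \<xi> u v]
        norm_scaleR_add_le[of 0 t \<xi> u v] norm_triangle_ineq[of "t *\<^sub>R u" "\<xi> *\<^sub>R v"] tuv \<xi> t \<eta>
      unfolding e_def by (fastforce intro: order_trans mult_left_mono)
    also have "\<dots> \<le> \<eta> * t * (norm u + 2 * norm v)"
      using \<xi> \<eta> mult_right_mono[of \<xi> t "norm v"] by (simp add: algebra_simps mult_left_mono)
    finally have ne: "norm e \<le> \<eta> * t * (norm u + 2 * norm v)" .
    have "g (x + t *\<^sub>R u + t *\<^sub>R v) - g (x + t *\<^sub>R u) - g (x + t *\<^sub>R v) + g x - t\<^sup>2 * (H u \<bullet> v)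
        = t * (e \<bullet> v)"
      unfolding mv e_def by (simp add: H.scaleR inner_diff_left power2_eq_square add.assoc algebra_simps)
    also have "\<bar>\<dots>\<bar> \<le> t * (norm e * norm v)"
      using t by (simp add: abs_mult Cauchy_Schwarz_ineq2 mult_left_mono)
    also have "\<dots> \<le> t * (\<eta> * t * (norm u + 2 * norm v) * norm v)"
      using ne t by (intro mult_left_mono mult_right_mono) auto
    finally show "\<bar>g (x + t *\<^sub>R u + t *\<^sub>R v) - g (x + t *\<^sub>R u) - g (x + t *\<^sub>R v) + g x - t\<^sup>2 * (H u \<bullet> v)\<bar>
       \<le> \<eta> * t\<^sup>2 * ((norm u + 2 * norm v) * norm v)"
      by (simp add: power2_eq_square algebra_simps)
  qed
qed

lemma le_of_le_add_mult_epsilon: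
  fixes a b C :: real
  assumes "0 \<le> C" and "\<And>\<eta>. 0 < \<eta> \<Longrightarrow> a \<le> b + \<eta> * C"
  shows "a \<le> b"
proof (rule field_le_epsilon)
  fix e :: real assume "0 < e"
  with assms(1) have "a \<le> b + e / (C + 1) * C" by (intro assms(2)) simp
  also have "e / (C + 1) * C \<le> e" using \<open>0 < e\<close> assms(1) by (simp add: field_simps)
  finally show "a \<le> b + e" by simp
qed

lemma second_derivative_symmetric:
  fixes g :: "'a::real_inner \<Rightarrow> real"
  assumes S: "open S" "x \<in> S"
    and dg: "\<And>z. z \<in> S \<Longrightarrow> (g has_derivative (\<lambda>h. gr z \<bullet> h)) (at z)"
    and dH: "(gr has_derivative H) (at x)"
  shows "H u \<bullet> v = H v \<bullet> u"
proof -
  define C where "C = (norm u + 2 * norm v) * norm v + (norm v + 2 * norm u) * norm u"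
  have "\<bar>H u \<bullet> v - H v \<bullet> u\<bar> \<le> 0 + \<eta> * C" if \<eta>: "0 < \<eta>" for \<eta>
  proof -
    obtain d1 where d1: "0 < d1" "\<And>t. 0 < t \<Longrightarrow> t < d1 \<Longrightarrow>
       \<bar>g (x + t *\<^sub>R u + t *\<^sub>R v) - g (x + t *\<^sub>R u) - g (x + t *\<^sub>R v) + g x - t\<^sup>2 * (H u \<bullet> v)\<bar>
         \<le> \<eta> * t\<^sup>2 * ((norm u + 2 * norm v) * norm v)"
      using second_difference_approx[OF S dg dH \<eta>] by blast
    obtain d2 where d2: "0 < d2" "\<And>t. 0 < t \<Longrightarrow> t < d2 \<Longrightarrow>
       \<bar>g (x + t *\<^sub>R v + t *\<^sub>R u) - g (x + t *\<^sub>R v) - g (x + t *\<^sub>R u) + g x - t\<^sup>2 * (H v \<bullet> u)\<bar>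
         \<le> \<eta> * t\<^sup>2 * ((norm v + 2 * norm u) * norm u)"
      using second_difference_approx[OF S dg dH \<eta>] by blast
    define t where "t = min d1 d2 / 2"
    have t: "0 < t" "t < d1" "t < d2" using d1 d2 unfolding t_def by auto
    define \<Delta> where "\<Delta> = g (x + t *\<^sub>R u + t *\<^sub>R v) - g (x + t *\<^sub>R u) - g (x + t *\<^sub>R v) + g x"
    have "t\<^sup>2 * \<bar>H u \<bullet> v - H v \<bullet> u\<bar> = \<bar>(\<Delta> - t\<^sup>2 * (H v \<bullet> u)) - (\<Delta> - t\<^sup>2 * (H u \<bullet> v))\<bar>"
    proof -
      have "(\<Delta> - t\<^sup>2 * (H v \<bullet> u)) - (\<Delta> - t\<^sup>2 * (H u \<bullet> v)) = t\<^sup>2 * (H u \<bullet> v - H v \<bullet> u)"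
        by (simp add: algebra_simps)
      then show ?thesis by (simp add: abs_mult)
    qed
    also have "\<dots> \<le> \<bar>\<Delta> - t\<^sup>2 * (H v \<bullet> u)\<bar> + \<bar>\<Delta> - t\<^sup>2 * (H u \<bullet> v)\<bar>"
      by (rule abs_triangle_ineq4)
    also have "\<dots> \<le> t\<^sup>2 * (\<eta> * C)"
      using d1(2)[OF t(1,2)] d2(2)[OF t(1,3)] unfolding C_def \<Delta>_def
      by (simp add: algebra_simps add_ac)
    finally have "t\<^sup>2 * \<bar>H u \<bullet> v - H v \<bullet> u\<bar> \<le> t\<^sup>2 * (\<eta> * C)" .
    then show ?thesis using t by simp
  qed
  then have "\<bar>H u \<bullet> v - H v \<bullet> u\<bar> \<le> 0"
    by (rule le_of_le_add_mult_epsilon[rotated]) (auto simp: C_def)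
  then show ?thesis by simp
qed

lemma norm_le_of_quadratic_form_bounds:
  fixes H :: "'a::real_inner \<Rightarrow> 'a"
  assumes lin: "linear H"
    and sym: "\<And>u v. H u \<bullet> v = H v \<bullet> u"
    and lo: "\<And>v. lo * (norm v)\<^sup>2 \<le> v \<bullet> H v" and hi: "\<And>v. v \<bullet> H v \<le> hi * (norm v)\<^sup>2"
  shows "norm (H v) \<le> max \<bar>lo\<bar> \<bar>hi\<bar> * norm v"
proof -
  interpret linear H by fact
  define D where "D = max \<bar>lo\<bar> \<bar>hi\<bar>"
  have quad: "\<bar>w \<bullet> H w\<bar> \<le> D * (norm w)\<^sup>2" for w
  proof -
    have "- D \<le> lo" "hi \<le> D" unfolding D_def by auto
    then have "- D * (norm w)\<^sup>2 \<le> lo * (norm w)\<^sup>2" "hi * (norm w)\<^sup>2 \<le> D * (norm w)\<^sup>2"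
      by (intro mult_right_mono; simp)+
    then show ?thesis using lo[of w] hi[of w] by (simp add: abs_le_iff)
  qed
  have polarization: "4 * (u \<bullet> H w) = (u + w) \<bullet> H (u + w) - (u - w) \<bullet> H (u - w)" for u w
    using sym[of u w]
    by (simp add: add diff inner_add_left inner_add_right inner_diff_left inner_diff_right inner_commute)
  have bilinear_bound: "4 * (u \<bullet> H w) \<le> 2 * D * ((norm u)\<^sup>2 + (norm w)\<^sup>2)" for u w
  proof -
    have "4 * (u \<bullet> H w) \<le> D * (norm (u + w))\<^sup>2 + D * (norm (u - w))\<^sup>2"
      unfolding polarization using quad[of "u + w"] quad[of "u - w"] by linarith
    also have "\<dots> = 2 * D * ((norm u)\<^sup>2 + (norm w)\<^sup>2)"
      by (simp add: power2_norm_eq_inner inner_add_left inner_add_right inner_diff_left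
          inner_diff_right inner_commute algebra_simps)
    finally show ?thesis .
  qed
  show ?thesis
  proof (cases "H v = 0")
    case False
    define u where "u = (norm v / norm (H v)) *\<^sub>R H v"
    have "norm u = norm v" "u \<bullet> H v = norm v * norm (H v)"
      using False unfolding u_def by (simp_all add: power2_norm_eq_inner[symmetric] power2_eq_square)
    then have "norm v * norm (H v) \<le> norm v * (D * norm v)"
      using bilinear_bound[of u v] by (simp add: power2_eq_square algebra_simps)
    moreover have "v \<noteq> 0" using False zero by auto
    ultimately show ?thesis unfolding D_def by simp
  qed (simp add: D_def)
qed

section \<open>Convexity and curvature\<close>

lemma strongly_convex_on_imp_above_tangent:
  fixes g :: "'a::real_inner \<Rightarrow> real"
  assumes sc: "strongly_convex_on S \<mu> g" and a: "a \<in> S" and b: "b \<in> S"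
    and der: "(g has_derivative (\<lambda>h. gr \<bullet> h)) (at a)"
  shows "g a + gr \<bullet> (b - a) + \<mu> / 2 * (norm (b - a))\<^sup>2 \<le> g b"
proof -
  define r where "r = norm (b - a)"
  have "((\<lambda>t. g b - g a - \<mu> / 2 * (1 - t) * r\<^sup>2) \<longlongrightarrow> g b - g a - \<mu> / 2 * (1 - 0) * r\<^sup>2) (at_right 0)"
    by (intro tendsto_intros)
  moreover have "((\<lambda>t. (g (a + t *\<^sub>R (b - a)) - g (a + 0 *\<^sub>R (b - a))) / t) \<longlongrightarrow> gr \<bullet> (b - a)) (at_right 0)"
    by (rule right_difference_quotient_tendsto[OF has_real_derivative_along_line]) (simp add: der)
  moreover have "\<forall>\<^sub>F t in at_right 0. (g (a + t *\<^sub>R (b - a)) - g (a + 0 *\<^sub>R (b - a))) / t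
      \<le> g b - g a - \<mu> / 2 * (1 - t) * r\<^sup>2"
    using eventually_at_right_real[OF zero_less_one]
  proof eventually_elim
    case (elim t)
    then have "g ((1 - t) *\<^sub>R a + t *\<^sub>R b) \<le> (1 - t) * g a + t * g b - \<mu> / 2 * t * (1 - t) * r\<^sup>2"
      using sc a b unfolding strongly_convex_on_def r_def by (auto simp: norm_minus_commute)
    moreover have "(1 - t) *\<^sub>R a + t *\<^sub>R b = a + t *\<^sub>R (b - a)" by (simp add: algebra_simps)
    ultimately show ?case using elim by (simp add: field_simps)
  qed
  ultimately have "gr \<bullet> (b - a) \<le> g b - g a - \<mu> / 2 * r\<^sup>2"
    by (intro tendsto_le[OF trivial_limit_at_right_real]) simp_all
  then show ?thesis unfolding r_def by simp
qed

lemma convex_on_imp_strongly_convex_on_0: "convex_on S f \<Longrightarrow> strongly_convex_on S 0 f"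
  unfolding strongly_convex_on_def by (auto dest: convex_onD)

lemma hessian_psd_of_monotone_gradient:
  fixes gr :: "'a::real_inner \<Rightarrow> 'a"
  assumes S: "open S" "z \<in> S" and dH: "(gr has_derivative H) (at z)"
    and mono: "\<And>p q. p \<in> S \<Longrightarrow> q \<in> S \<Longrightarrow> 0 \<le> (gr p - gr q) \<bullet> (p - q)"
  shows "0 \<le> v \<bullet> H v"
proof -
  have "((\<lambda>t. gr (z + t *\<^sub>R v) \<bullet> v) has_real_derivative H v \<bullet> v) (at 0)"
    using has_derivative_inner_left[OF has_derivative_along_line[of gr H z 0 v]] dH
    by (intro has_derivative_imp_has_field_derivative) simp_all
  then have "((\<lambda>t. (gr (z + t *\<^sub>R v) \<bullet> v - gr (z + 0 *\<^sub>R v) \<bullet> v) / t) \<longlongrightarrow> H v \<bullet> v) (at_right 0)"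
    by (rule right_difference_quotient_tendsto)
  moreover have "\<forall>\<^sub>F t in at_right 0. z + t *\<^sub>R v \<in> S"
    using S by (intro topological_tendstoD) (auto intro!: tendsto_eq_intros)
  then have "\<forall>\<^sub>F t in at_right 0. 0 \<le> (gr (z + t *\<^sub>R v) \<bullet> v - gr (z + 0 *\<^sub>R v) \<bullet> v) / t"
    using eventually_at_right_less[of 0]
  proof eventually_elim
    case (elim t)
    then have "0 \<le> t * ((gr (z + t *\<^sub>R v) - gr z) \<bullet> v)"
      using mono[of "z + t *\<^sub>R v" z] S by simp
    with elim show ?case by (simp add: zero_le_mult_iff inner_diff_left)
  qed
  ultimately have "0 \<le> H v \<bullet> v"
    by (rule tendsto_lowerbound) (simp add: trivial_limit_def[symmetric])
  then show ?thesis by (simp add: inner_commute)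
qed

lemma DERIV_nonneg_imp_le_unit_interval:
  fixes \<phi> :: "real \<Rightarrow> real"
  assumes "\<And>s. 0 \<le> s \<Longrightarrow> s \<le> 1 \<Longrightarrow> (\<phi> has_real_derivative \<phi>' s) (at s)"
    and "\<And>s. 0 \<le> s \<Longrightarrow> s \<le> 1 \<Longrightarrow> 0 \<le> \<phi>' s"
  shows "\<phi> 0 \<le> \<phi> 1"
proof (rule DERIV_nonneg_imp_increasing_open[where f = \<phi>])
  have "(\<phi> has_real_derivative \<phi>' s) (at s within {0..1})" if "s \<in> {0..1}" for s
    using assms(1) that by (auto intro: has_field_derivative_at_within)
  then show "continuous_on {0..1} \<phi>" by (rule DERIV_continuous_on)
  fix s :: real assume "0 < s" "s < 1"
  with assms show "\<exists>y. (\<phi> has_real_derivative y) (at s) \<and> 0 \<le> y" by (intro exI[of _ "\<phi>' s"]) simp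
qed simp

lemma strongly_monotone_of_hessian_lower_bound:
  fixes gF :: "'a::real_inner \<Rightarrow> 'a"
  assumes K: "convex K" and dgF: "\<And>z. z \<in> K \<Longrightarrow> (gF has_derivative HF z) (at z)"
    and lb: "\<And>z v. z \<in> K \<Longrightarrow> \<mu> * (norm v)\<^sup>2 \<le> v \<bullet> HF z v"
    and p: "p \<in> K" and q: "q \<in> K"
  shows "\<mu> * (norm (p - q))\<^sup>2 \<le> (gF p - gF q) \<bullet> (p - q)"
proof -
  define \<psi> where "\<psi> s = gF (q + s *\<^sub>R (p - q)) \<bullet> (p - q) - s * (\<mu> * (norm (p - q))\<^sup>2)" for s
  have "\<psi> 0 \<le> \<psi> 1"
  proof (rule DERIV_nonneg_imp_le_unit_interval)
    fix s :: real assume s: "0 \<le> s" "s \<le> 1"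
    define z where "z = q + s *\<^sub>R (p - q)"
    have "z \<in> K" using convexD_alt[OF K q p s] unfolding z_def by (simp add: algebra_simps)
    then have "((\<lambda>s. gF (q + s *\<^sub>R (p - q))) has_derivative (\<lambda>h. h *\<^sub>R HF z (p - q))) (at s)"
      using has_derivative_along_line[of gF "HF z" q s "p - q"] dgF unfolding z_def by blast
    from has_derivative_inner_left[OF this, of "p - q"]
    have "((\<lambda>s. gF (q + s *\<^sub>R (p - q)) \<bullet> (p - q)) has_derivative (\<lambda>h. h * (HF z (p - q) \<bullet> (p - q)))) (at s)"
      by simp
    then have "(\<psi> has_derivative (\<lambda>h. h * (HF z (p - q) \<bullet> (p - q)) - h * (\<mu> * (norm (p - q))\<^sup>2))) (at s)"
      unfolding \<psi>_def by (intro has_derivative_diff has_derivative_mult_left[OF has_derivative_ident])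
    then show "(\<psi> has_real_derivative HF z (p - q) \<bullet> (p - q) - \<mu> * (norm (p - q))\<^sup>2) (at s)"
      by (rule has_derivative_imp_has_field_derivative) (simp add: algebra_simps)
    show "0 \<le> HF z (p - q) \<bullet> (p - q) - \<mu> * (norm (p - q))\<^sup>2"
      using lb[OF \<open>z \<in> K\<close>, of "p - q"] by (simp add: inner_commute)
  qed
  then show ?thesis unfolding \<psi>_def by (simp add: inner_diff_left)
qed

lemma above_tangent_of_hessian_lower_bound:
  fixes F :: "'a::real_inner \<Rightarrow> real" and gF :: "'a \<Rightarrow> 'a"
  assumes K: "convex K" and dF: "\<And>z. z \<in> K \<Longrightarrow> (F has_derivative (\<lambda>h. gF z \<bullet> h)) (at z)"
    and dgF: "\<And>z. z \<in> K \<Longrightarrow> (gF has_derivative HF z) (at z)"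
    and lb: "\<And>z v. z \<in> K \<Longrightarrow> \<mu> * (norm v)\<^sup>2 \<le> v \<bullet> HF z v"
    and a: "a \<in> K" and b: "b \<in> K"
  shows "F a + gF a \<bullet> (b - a) + \<mu> / 2 * (norm (b - a))\<^sup>2 \<le> F b"
proof -
  define r where "r = norm (b - a)"
  define \<omega> where "\<omega> s = F (a + s *\<^sub>R (b - a)) - s * (gF a \<bullet> (b - a)) - \<mu> / 2 * s\<^sup>2 * r\<^sup>2" for s
  have "\<omega> 0 \<le> \<omega> 1"
  proof (rule DERIV_nonneg_imp_le_unit_interval)
    fix s :: real assume s: "0 \<le> s" "s \<le> 1"
    define z where "z = a + s *\<^sub>R (b - a)"
    have zK: "z \<in> K" using convexD_alt[OF K a b s] unfolding z_def by (simp add: algebra_simps)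
    then have "((\<lambda>s. F (a + s *\<^sub>R (b - a))) has_derivative (\<lambda>h. h * (gF z \<bullet> (b - a)))) (at s)"
      using has_derivative_along_line[of F _ a s "b - a"] dF unfolding z_def by simp
    then have "(\<omega> has_derivative
        (\<lambda>h. h * (gF z \<bullet> (b - a)) - h * (gF a \<bullet> (b - a)) - h * (\<mu> * s * r\<^sup>2))) (at s)"
      unfolding \<omega>_def
      by (intro has_derivative_diff has_derivative_mult_left[OF has_derivative_ident])
         (auto intro!: derivative_eq_intros simp: power2_eq_square algebra_simps)
    then show "(\<omega> has_real_derivative gF z \<bullet> (b - a) - gF a \<bullet> (b - a) - \<mu> * s * r\<^sup>2) (at s)"
      by (rule has_derivative_imp_has_field_derivative) (simp add: algebra_simps)
    have "\<mu> * (s * r)\<^sup>2 \<le> s * ((gF z - gF a) \<bullet> (b - a))"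
      using strongly_monotone_of_hessian_lower_bound[OF K dgF lb zK a] s
      by (simp add: z_def r_def power_mult_distrib)
    then have "s * (\<mu> * s * r\<^sup>2) \<le> s * ((gF z - gF a) \<bullet> (b - a))"
      by (simp add: power2_eq_square algebra_simps)
    then show "0 \<le> gF z \<bullet> (b - a) - gF a \<bullet> (b - a) - \<mu> * s * r\<^sup>2"
      using s by (cases "s = 0") (auto simp: inner_diff_left z_def)
  qed
  then show ?thesis unfolding \<omega>_def r_def by simp
qed

lemma norm_diff_le_of_derivative_bound:
  fixes gr :: "'a::{real_normed_vector, perfect_space} \<Rightarrow> 'b::real_normed_vector"
  assumes K: "convex K" and d: "\<And>z. z \<in> K \<Longrightarrow> (gr has_derivative H z) (at z)"
    and bound: "\<And>z v. z \<in> K \<Longrightarrow> norm (H z v) \<le> C * norm v"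
    and a: "a \<in> K" and b: "b \<in> K"
  shows "norm (gr a - gr b) \<le> C * norm (a - b)"
proof (rule differentiable_bound[OF K _ _ a b])
  show "(gr has_derivative H z) (at z within K)" if "z \<in> K" for z
    using d[OF that] by (rule has_derivative_at_withinI)
  show "onorm (H z) \<le> C" if "z \<in> K" for z
    by (rule onorm_le) (rule bound[OF that])
qed

lemma strongly_convex_on_add_convex_on:
  assumes "strongly_convex_on S \<mu> f" and "convex_on S g"
  shows "strongly_convex_on S \<mu> (\<lambda>z. f z + g z)"
  unfolding strongly_convex_on_def
proof (intro ballI allI impI)
  fix x y and t :: real assume xy: "x \<in> S" "y \<in> S" and t: "0 \<le> t \<and> t \<le> 1"
  have "f ((1 - t) *\<^sub>R x + t *\<^sub>R y) \<le> (1 - t) * f x + t * f y - \<mu> / 2 * t * (1 - t) * (norm (x - y))\<^sup>2"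
    using assms(1) xy t unfolding strongly_convex_on_def by blast
  moreover have "g ((1 - t) *\<^sub>R x + t *\<^sub>R y) \<le> (1 - t) * g x + t * g y"
    using convex_onD[OF assms(2)] xy t by blast
  ultimately show "f ((1 - t) *\<^sub>R x + t *\<^sub>R y) + g ((1 - t) *\<^sub>R x + t *\<^sub>R y)
      \<le> (1 - t) * (f x + g x) + t * (f y + g y) - \<mu> / 2 * t * (1 - t) * (norm (x - y))\<^sup>2"
    by (simp add: algebra_simps)
qed

lemma strongly_convex_on_minimizer_growth:
  assumes S: "convex S" and sc: "strongly_convex_on S \<mu> s" and h: "h \<in> S" and z: "z \<in> S"
    and min: "\<And>w. w \<in> S \<Longrightarrow> s h \<le> s w"
  shows "s h + \<mu> / 2 * (norm (z - h))\<^sup>2 \<le> s z"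
proof -
  define r where "r = norm (z - h)"
  have "\<forall>\<^sub>F t in at_right 0. s h + \<mu> / 2 * (1 - t) * r\<^sup>2 \<le> s z"
    using eventually_at_right_real[OF zero_less_one]
  proof eventually_elim
    case (elim t)
    have "s h \<le> s ((1 - t) *\<^sub>R h + t *\<^sub>R z)"
      using elim by (intro min convexD_alt[OF S h z]) auto
    also have "\<dots> \<le> (1 - t) * s h + t * s z - \<mu> / 2 * t * (1 - t) * r\<^sup>2"
      using sc h z elim unfolding strongly_convex_on_def r_def by (simp add: norm_minus_commute)
    finally have "t * (s h + \<mu> / 2 * (1 - t) * r\<^sup>2) \<le> t * s z"
      by (simp add: algebra_simps)
    with elim show ?case by simp
  qed
  moreover have "((\<lambda>t. s h + \<mu> / 2 * (1 - t) * r\<^sup>2) \<longlongrightarrow> s h + \<mu> / 2 * (1 - 0) * r\<^sup>2) (at_right 0)"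
    by (intro tendsto_intros)
  ultimately show ?thesis unfolding r_def
    by (intro tendsto_le[OF trivial_limit_at_right_real tendsto_const]) simp_all
qed

lemma convex_on_lower_bound_of_unit_ball_bound:
  fixes G :: "'a::real_normed_vector \<Rightarrow> real"
  assumes K: "convex K" and G: "convex_on K G" and h: "h \<in> K" and C: "0 \<le> C"
    and near: "\<And>w. w \<in> K \<Longrightarrow> norm (w - h) \<le> 1 \<Longrightarrow> G h - C \<le> G w"
    and z: "z \<in> K"
  shows "G h - C - C * norm (z - h) \<le> G z"
proof (cases "norm (z - h) \<le> 1")
  case True
  then show ?thesis using near[OF z] mult_nonneg_nonneg[OF C norm_ge_zero[of "z - h"]] by linarith
next
  case False
  define r where "r = norm (z - h)"
  have r: "1 < r" using False unfolding r_def by simp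
  define w where "w = (1 - 1 / r) *\<^sub>R h + (1 / r) *\<^sub>R z"
  have wK: "w \<in> K" unfolding w_def using r by (intro convexD_alt[OF K h z]) auto
  have "norm (w - h) = 1"
  proof -
    have "w - h = (1 / r) *\<^sub>R (z - h)" unfolding w_def by (simp add: algebra_simps)
    then show ?thesis using r by (auto simp: r_def)
  qed
  then have "G h - C \<le> (1 - 1 / r) * G h + (1 / r) * G z"
    using near[OF wK] convex_onD[OF G, of "1 / r" h z] h z r unfolding w_def by simp
  then have "r * (G h - C) \<le> (r - 1) * G h + G z"
    using r by (simp add: field_simps)
  then show ?thesis using C r by (simp add: r_def algebra_simps)
qed

section \<open>Push-sum weights on jointly strongly connected digraphs\<close>

lemma rtrancl_exit_edge:
  assumes "(a, b) \<in> R\<^sup>*" "a \<in> S" "b \<notin> S"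
  obtains p q where "(p, q) \<in> R" "p \<in> S" "q \<notin> S"
  using assms by (induction rule: rtrancl_induct) auto

locale push_sum =
  fixes m :: nat and E :: "nat \<Rightarrow> (nat \<times> nat) set" and B :: nat
    and c :: "nat \<Rightarrow> nat \<Rightarrow> nat \<Rightarrow> real" and cl :: real and phi :: "nat \<Rightarrow> nat \<Rightarrow> real"
  assumes m_pos: "0 < m"
    and B_pos: "0 < B"
    and B_conn: "\<And>n. strongly_connected_on m (\<Union>t\<in>{n * B ..< (Suc n) * B}. E t)"
    and cl_pos: "0 < cl"
    and c_diag: "\<And>t i. i < m \<Longrightarrow> c t i i \<ge> cl"
    and c_edge: "\<And>t i j. i < m \<Longrightarrow> j < m \<Longrightarrow> (j, i) \<in> E t \<Longrightarrow> c t i j \<ge> cl"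
    and c_zero: "\<And>t i j. i < m \<Longrightarrow> j < m \<Longrightarrow> i \<noteq> j \<Longrightarrow> (j, i) \<notin> E t \<Longrightarrow> c t i j = 0"
    and c_colstoch: "\<And>t j. j < m \<Longrightarrow> (\<Sum>i<m. c t i j) = 1"
    and phi0: "\<And>i. i < m \<Longrightarrow> phi 0 i = 1"
    and phi_upd: "\<And>n i. i < m \<Longrightarrow> phi (Suc n) i = (\<Sum>j<m. c n i j * phi n j)"
begin

definition phi_lb :: real where "phi_lb = cl ^ (2 * (m - 1) * B)"

lemma c_nonneg: "i < m \<Longrightarrow> j < m \<Longrightarrow> 0 \<le> c t i j"
proof -
  assume ij: "i < m" "j < m"
  consider "i = j" | "(j, i) \<in> E t" | "i \<noteq> j" "(j, i) \<notin> E t" by blast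
  then show ?thesis using c_diag[of i t] c_edge[OF ij] c_zero[OF ij] cl_pos ij by cases fastforce+
qed

lemma cl_le_1: "cl \<le> 1"
proof -
  have "c 0 0 0 \<le> (\<Sum>i<m. c 0 i 0)"
    using m_pos c_nonneg by (intro member_le_sum) auto
  then show ?thesis using c_colstoch[OF m_pos, of 0] c_diag[OF m_pos, of 0] by linarith
qed

lemma phi_Suc_ge_summand_of_nonneg: "i < m \<Longrightarrow> j < m \<Longrightarrow> (\<forall>k<m. 0 \<le> phi n k) \<Longrightarrow> c n i j * phi n j \<le> phi (Suc n) i"
  unfolding phi_upd by (rule member_le_sum) (auto intro: mult_nonneg_nonneg c_nonneg)

lemma phi_pos: "i < m \<Longrightarrow> 0 < phi n i"
proof (induction n arbitrary: i)
  case (Suc n)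
  have "0 < c n i i * phi n i" using Suc c_diag[of i n] cl_pos by simp
  also have "\<dots> \<le> phi (Suc n) i" using Suc by (intro phi_Suc_ge_summand_of_nonneg) (auto intro: less_imp_le)
  finally show ?case .
qed (simp add: phi0)

lemma sum_phi: "(\<Sum>i<m. phi n i) = real m"
proof (induction n)
  case (Suc n)
  have "(\<Sum>i<m. phi (Suc n) i) = (\<Sum>i<m. \<Sum>j<m. c n i j * phi n j)"
    using phi_upd by simp
  also have "\<dots> = (\<Sum>j<m. \<Sum>i<m. c n i j * phi n j)" by (rule sum.swap)
  also have "\<dots> = (\<Sum>j<m. phi n j)" using c_colstoch by (simp add: sum_distrib_right[symmetric])
  finally show ?case using Suc by simp
qed (simp add: phi0)

lemma phi_Suc_ge_summand: "i < m \<Longrightarrow> j < m \<Longrightarrow> c n i j * phi n j \<le> phi (Suc n) i"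
  using phi_pos by (intro phi_Suc_ge_summand_of_nonneg) (auto intro: less_imp_le)

lemma phi_ge_pow: "i < m \<Longrightarrow> cl ^ k * phi n i \<le> phi (n + k) i"
proof (induction k)
  case (Suc k)
  have "cl ^ Suc k * phi n i \<le> cl * phi (n + k) i"
    using Suc cl_pos by (simp add: mult.assoc)
  also have "\<dots> \<le> c (n + k) i i * phi (n + k) i"
    using Suc.prems c_diag phi_pos by (intro mult_right_mono) (auto intro: less_imp_le)
  also have "\<dots> \<le> phi (n + Suc k) i" using phi_Suc_ge_summand Suc.prems by simp
  finally show ?case .
qed simp

lemma phi_ge_along_edge:
  assumes i: "i < m" and j: "j < m" and e: "(j, i) \<in> E t" and t: "a \<le> t" "t < a + B"
  shows "cl ^ B * phi a j \<le> phi (a + B) i"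
proof -
  have "cl ^ B * phi a j = cl ^ (a + B - Suc t) * (cl * (cl ^ (t - a) * phi a j))"
    using t by (simp flip: power_Suc power_add mult.assoc)
  also have "\<dots> \<le> cl ^ (a + B - Suc t) * (cl * phi t j)"
    using phi_ge_pow[OF j, of "t - a" a] t cl_pos by (intro mult_left_mono) auto
  also have "\<dots> \<le> cl ^ (a + B - Suc t) * phi (Suc t) i"
  proof -
    have "cl * phi t j \<le> c t i j * phi t j"
      using c_edge[OF i j e] phi_pos[OF j] by (intro mult_right_mono) (auto intro: less_imp_le)
    also have "\<dots> \<le> phi (Suc t) i" by (rule phi_Suc_ge_summand[OF i j])
    finally show ?thesis using cl_pos by (intro mult_left_mono) auto
  qed
  also have "\<dots> \<le> phi (a + B) i"
    using phi_ge_pow[OF i, of "a + B - Suc t" "Suc t"] t by simp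
  finally show ?thesis .
qed

lemma exists_phi_ge_1: "\<exists>j<m. 1 \<le> phi n j"
proof (rule ccontr)
  assume "\<not> ?thesis"
  then have "(\<Sum>j<m. phi n j) < (\<Sum>j<m. 1)" using m_pos by (intro sum_strict_mono) auto
  then show False using sum_phi[of n] by simp
qed

lemma phi_spreads_out:
  assumes S: "S \<subseteq> {..<m}" "S \<noteq> {}" "S \<noteq> {..<m}"
    and lb: "\<And>j. j \<in> S \<Longrightarrow> \<beta> \<le> phi (\<nu> * B) j"
  obtains i where "i < m" "i \<notin> S" "cl ^ B * \<beta> \<le> phi (Suc \<nu> * B) i"
proof -
  obtain j i0 where j: "j \<in> S" and i0: "i0 < m" "i0 \<notin> S" using S by blast
  define E' where "E' = (\<Union>t\<in>{\<nu> * B ..< Suc \<nu> * B}. E t)"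
  have "(j, i0) \<in> (E' \<inter> {..<m} \<times> {..<m})\<^sup>*"
    using B_conn[of \<nu>] j S i0 unfolding strongly_connected_on_def E'_def by blast
  then obtain p q where pq: "(p, q) \<in> E' \<inter> {..<m} \<times> {..<m}" "p \<in> S" "q \<notin> S"
    using j i0(2) by (rule rtrancl_exit_edge)
  then obtain t where t: "\<nu> * B \<le> t" "t < \<nu> * B + B" "(p, q) \<in> E t" unfolding E'_def by auto
  have "cl ^ B * \<beta> \<le> cl ^ B * phi (\<nu> * B) p"
    using lb[OF pq(2)] cl_pos by (intro mult_left_mono) auto
  also have "\<dots> \<le> phi (Suc \<nu> * B) q"
    using phi_ge_along_edge[of q p t "\<nu> * B"] pq t by (simp add: add.commute)
  finally show ?thesis using pq by (intro that) auto
qed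

lemma card_phi_ge_window:
  assumes "k < m"
  obtains S where "S \<subseteq> {..<m}" "k + 1 \<le> card S" "\<And>i. i \<in> S \<Longrightarrow> cl ^ (k * B) \<le> phi ((\<nu> + k) * B) i"
  using assms
proof (induction k arbitrary: thesis)
  case 0
  obtain j where "j < m" "1 \<le> phi (\<nu> * B) j" using exists_phi_ge_1 by blast
  then show ?case by (intro "0.prems"(1)[of "{j}"]) auto
next
  case (Suc k)
  then obtain S where S: "S \<subseteq> {..<m}" "k + 1 \<le> card S"
    and lb: "\<And>i. i \<in> S \<Longrightarrow> cl ^ (k * B) \<le> phi ((\<nu> + k) * B) i" by auto
  have fin: "finite S" using S(1) finite_subset by blast
  have keep: "cl ^ (Suc k * B) \<le> phi ((\<nu> + Suc k) * B) i" if "i \<in> S" for i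
  proof -
    have "cl ^ (Suc k * B) = cl ^ B * cl ^ (k * B)" by (simp add: power_add)
    also have "\<dots> \<le> cl ^ B * phi ((\<nu> + k) * B) i" using lb[OF that] cl_pos by (intro mult_left_mono) auto
    also have "\<dots> \<le> phi ((\<nu> + Suc k) * B) i"
      using phi_ge_pow[of i B "(\<nu> + k) * B"] that S(1) by (auto simp: algebra_simps)
    finally show ?thesis .
  qed
  show ?case
  proof (cases "S = {..<m}")
    case True
    then show ?thesis using Suc.prems keep by (intro Suc.prems(1)[of S]) auto
  next
    case False
    moreover have "S \<noteq> {}" using S(2) by auto
    ultimately obtain i where i: "i < m" "i \<notin> S" "cl ^ B * cl ^ (k * B) \<le> phi (Suc (\<nu> + k) * B) i"
      using phi_spreads_out[OF S(1)] lb by metis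
    show ?thesis
    proof (rule Suc.prems(1)[of "insert i S"])
      show "insert i S \<subseteq> {..<m}" "Suc k + 1 \<le> card (insert i S)" using S i fin by auto
      show "cl ^ (Suc k * B) \<le> phi ((\<nu> + Suc k) * B) j" if "j \<in> insert i S" for j
        using that keep i(3) by (auto simp: power_add algebra_simps)
    qed
  qed
qed

lemma phi_ge_after_all_windows: "i < m \<Longrightarrow> cl ^ ((m - 1) * B) \<le> phi ((\<nu> + (m - 1)) * B) i"
proof -
  assume i: "i < m"
  obtain S where S: "S \<subseteq> {..<m}" "m - 1 + 1 \<le> card S"
    and lb: "\<And>j. j \<in> S \<Longrightarrow> cl ^ ((m - 1) * B) \<le> phi ((\<nu> + (m - 1)) * B) j"
    using card_phi_ge_window[of "m - 1" \<nu>] m_pos by auto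
  have "S = {..<m}"
    using S card_subset_eq[OF finite_lessThan S(1)] card_mono[OF finite_lessThan S(1)] by simp
  then show ?thesis using lb i by auto
qed

lemma phi_ge_lower_bound: "i < m \<Longrightarrow> phi_lb \<le> phi n i"
proof -
  assume i: "i < m"
  consider "m = 1" | "n < (m - 1) * B" | "2 \<le> m" "(m - 1) * B \<le> n" using m_pos by linarith
  then have "cl ^ (2 * (m - 1) * B) \<le> phi n i"
  proof cases
    case 1
    then show ?thesis using i sum_phi[of n] by simp
  next
    case 2
    have "cl ^ (2 * (m - 1) * B) \<le> cl ^ n"
      using 2 cl_pos cl_le_1 by (intro power_decreasing) auto
    also have "\<dots> \<le> phi n i" using phi_ge_pow[OF i, of n 0] phi0[OF i] by simp
    finally show ?thesis .
  next
    case 3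
    have "m - 1 \<le> n div B" using div_le_mono[OF 3(2), of B] B_pos by simp
    then have window: "cl ^ ((m - 1) * B) \<le> phi (n div B * B) i"
      using phi_ge_after_all_windows[OF i, of "n div B - (m - 1)"] by simp
    have "1 * B \<le> (m - 1) * B" using 3(1) by (intro mult_le_mono1) linarith
    moreover have "2 * (m - 1) * B = (m - 1) * B + (m - 1) * B" by (simp only: mult_2 distrib_right)
    ultimately have "n mod B + (m - 1) * B \<le> 2 * (m - 1) * B"
      using mod_less_divisor[OF B_pos, of n] by linarith
    then have "cl ^ (2 * (m - 1) * B) \<le> cl ^ (n mod B) * cl ^ ((m - 1) * B)"
      using cl_pos cl_le_1 by (simp add: power_decreasing flip: power_add)
    also have "\<dots> \<le> cl ^ (n mod B) * phi (n div B * B) i"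
      using window cl_pos by (intro mult_left_mono) auto
    also have "\<dots> \<le> phi n i" using phi_ge_pow[OF i, of "n mod B" "n div B * B"] by simp
    finally show ?thesis .
  qed
  then show ?thesis by (simp add: phi_lb_def)
qed

end

section \<open>Strongly convex composite problems\<close>

locale composite_problem =
  fixes K :: "'a::euclidean_space set" and F G :: "'a \<Rightarrow> real" and gF :: "'a \<Rightarrow> 'a"
    and mu Lg :: real
  assumes K_ne: "K \<noteq> {}" and K_closed: "closed K" and K_convex: "convex K"
    and mu_pos: "0 < mu"
    and F_continuous: "continuous_on K F"
    and gF_lipschitz: "lipschitz_on Lg K gF"
    and F_above_tangent:
      "\<And>a b. a \<in> K \<Longrightarrow> b \<in> K \<Longrightarrow> F a + gF a \<bullet> (b - a) + mu / 2 * (norm (b - a))\<^sup>2 \<le> F b"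
    and G_convex: "convex_on K G"
    and bdd: "bdd_below ((\<lambda>z. F z + G z) ` K)"
begin

definition Umin :: real where "Umin = Inf ((\<lambda>z. F z + G z) ` K)"

lemma Umin_le: "z \<in> K \<Longrightarrow> Umin \<le> F z + G z"
  unfolding Umin_def using bdd by (auto intro: cInf_lower)

lemma midpoint_gap:
  assumes p: "p \<in> K" and q: "q \<in> K"
  shows "mu / 4 * (norm (p - q))\<^sup>2 \<le> F p + G p + F q + G q - 2 * Umin"
proof -
  define z where "z = (1 - 1 / 2) *\<^sub>R p + (1 / 2 :: real) *\<^sub>R q"
  have zK: "z \<in> K" unfolding z_def by (rule convexD_alt[OF K_convex p q]) auto
  have pz: "p - z = (1 / 2) *\<^sub>R (p - q)" and qz: "q - z = - (1 / 2) *\<^sub>R (p - q)"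
    unfolding z_def by (simp_all add: algebra_simps) (simp_all flip: scaleR_add_left)
  have "F z + gF z \<bullet> (p - z) + mu / 2 * (norm (p - z))\<^sup>2 \<le> F p"
    and "F z + gF z \<bullet> (q - z) + mu / 2 * (norm (q - z))\<^sup>2 \<le> F q"
    using F_above_tangent zK p q by auto
  moreover have "(norm (p - z))\<^sup>2 = (norm (p - q))\<^sup>2 / 4" "(norm (q - z))\<^sup>2 = (norm (p - q))\<^sup>2 / 4"
    unfolding pz qz by (simp_all add: power2_eq_square)
  moreover have "gF z \<bullet> (p - z) + gF z \<bullet> (q - z) = 0" unfolding pz qz by (simp add: inner_minus_right)
  ultimately have "2 * F z + mu / 4 * (norm (p - q))\<^sup>2 \<le> F p + F q" by (simp add: algebra_simps)
  moreover have "G z \<le> (1 - 1 / 2) * G p + (1 / 2) * G q"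
    unfolding z_def by (rule convex_onD[OF G_convex]) (use p q in auto)
  ultimately show ?thesis using Umin_le[OF zK] by (simp add: algebra_simps)
qed

definition minseq :: "nat \<Rightarrow> 'a" where
  "minseq k = (SOME p. p \<in> K \<and> F p + G p < Umin + inverse (real (Suc k)))"

lemma minseq: "minseq k \<in> K" "F (minseq k) + G (minseq k) < Umin + inverse (real (Suc k))"
proof -
  have "Inf ((\<lambda>z. F z + G z) ` K) < Umin + inverse (real (Suc k))" unfolding Umin_def by simp
  from cInf_lessD[OF _ this] K_ne
  have "\<exists>p. p \<in> K \<and> F p + G p < Umin + inverse (real (Suc k))" by auto
  from someI_ex[OF this] show "minseq k \<in> K" "F (minseq k) + G (minseq k) < Umin + inverse (real (Suc k))"
    unfolding minseq_def by auto
qed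

lemma Cauchy_minseq: "Cauchy minseq"
proof (rule metric_CauchyI)
  fix e :: real assume e: "0 < e"
  then obtain N where N: "inverse (real (Suc N)) < mu / 8 * e\<^sup>2"
    using reals_Archimedean[of "mu / 8 * e\<^sup>2"] mu_pos by auto
  have "dist (minseq k) (minseq l) < e" if "N \<le> k" "N \<le> l" for k l
  proof -
    define ik il iN gap where "ik = inverse (real (Suc k))" and "il = inverse (real (Suc l))"
      and "iN = inverse (real (Suc N))" and "gap = mu / 4 * (norm (minseq k - minseq l))\<^sup>2"
    have "ik \<le> iN" "il \<le> iN" unfolding ik_def il_def iN_def using that by (simp_all add: le_imp_inverse_le)
    moreover have "gap \<le> F (minseq k) + G (minseq k) + F (minseq l) + G (minseq l) - 2 * Umin"
      unfolding gap_def by (rule midpoint_gap[OF minseq(1) minseq(1)])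
    moreover have "F (minseq k) + G (minseq k) < Umin + ik" "F (minseq l) + G (minseq l) < Umin + il"
      unfolding ik_def il_def by (rule minseq(2))+
    ultimately have "gap < 2 * iN" by linarith
    with N have "mu * (norm (minseq k - minseq l))\<^sup>2 < mu * e\<^sup>2" unfolding iN_def gap_def by simp
    then have "(norm (minseq k - minseq l))\<^sup>2 < e\<^sup>2" using mu_pos by simp
    then show ?thesis using e by (simp add: dist_norm power_less_imp_less_base)
  qed
  then show "\<exists>M. \<forall>k\<ge>M. \<forall>l\<ge>M. dist (minseq k) (minseq l) < e" by auto
qed

definition xstar :: 'a where "xstar = lim minseq"

text \<open>Since \<open>G\<close> is only convex on \<open>K\<close>, it need not be lower semicontinuous at the
  boundary of \<open>K\<close>: \<open>Gstar\<close>, the limit of \<open>G\<close> along the minimizing sequence, can lie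
  strictly below \<open>G xstar\<close>, and \<open>xstar\<close> need not be a minimizer.\<close>
definition Gstar :: real where "Gstar = Umin - F xstar"

lemma minseq_tendsto: "minseq \<longlonglongrightarrow> xstar"
  unfolding xstar_def using Cauchy_minseq by (simp add: Cauchy_convergent_iff convergent_LIMSEQ_iff)

lemma xstar_in_K: "xstar \<in> K"
  using closed_sequentially[OF K_closed _ minseq_tendsto] minseq(1) by auto

lemma tendsto_minseq_compose: "continuous_on K f \<Longrightarrow> (\<lambda>k. f (minseq k)) \<longlonglongrightarrow> f xstar"
  using minseq(1) by (intro continuous_on_tendsto_compose[OF _ minseq_tendsto xstar_in_K] always_eventually) auto

lemma G_minseq_tendsto: "(\<lambda>k. G (minseq k)) \<longlonglongrightarrow> Gstar"
proof -
  have "(\<lambda>k. F (minseq k) + G (minseq k)) \<longlonglongrightarrow> Umin"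
  proof (rule tendsto_sandwich[of "\<lambda>_. Umin" _ _ "\<lambda>k. Umin + inverse (real (Suc k))"])
    show "\<forall>\<^sub>F k in sequentially. Umin \<le> F (minseq k) + G (minseq k)"
      by (intro always_eventually allI Umin_le minseq(1))
    show "\<forall>\<^sub>F k in sequentially. F (minseq k) + G (minseq k) \<le> Umin + inverse (real (Suc k))"
      by (intro always_eventually allI less_imp_le minseq(2))
    show "(\<lambda>k. Umin + inverse (real (Suc k))) \<longlonglongrightarrow> Umin" by (rule LIMSEQ_inverse_real_of_nat_add)
  qed (rule tendsto_const)
  then have "(\<lambda>k. (F (minseq k) + G (minseq k)) - F (minseq k)) \<longlonglongrightarrow> Umin - F xstar"
    by (intro tendsto_diff tendsto_minseq_compose F_continuous)
  then show ?thesis unfolding Gstar_def by simp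
qed

lemma le_at_xstar:
  assumes "continuous_on K \<phi>" and "0 \<le> c" and "\<And>p. p \<in> K \<Longrightarrow> a \<le> \<phi> p + c * G p"
  shows "a \<le> \<phi> xstar + c * Gstar"
proof (rule tendsto_le[OF trivial_limit_sequentially _ tendsto_const])
  show "(\<lambda>k. \<phi> (minseq k) + c * G (minseq k)) \<longlonglongrightarrow> \<phi> xstar + c * Gstar"
    by (intro tendsto_intros tendsto_minseq_compose G_minseq_tendsto assms(1))
qed (intro always_eventually allI assms(3) minseq(1))

lemma Umin_le_along_segment:
  assumes p: "p \<in> K" and z: "z \<in> K" and t: "0 \<le> t" "t \<le> 1"
  shows "Umin \<le> F p + t * (gF p \<bullet> (z - p)) + t\<^sup>2 * (Lg * (norm (z - p))\<^sup>2) + t * G z + (1 - t) * G p"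
proof -
  define zt where "zt = (1 - t) *\<^sub>R p + t *\<^sub>R z"
  have ztK: "zt \<in> K" unfolding zt_def using t by (intro convexD_alt[OF K_convex p z])
  have zt_p: "zt - p = t *\<^sub>R (z - p)" by (simp add: zt_def algebra_simps)
  have "F zt + gF zt \<bullet> (p - zt) + mu / 2 * (norm (p - zt))\<^sup>2 \<le> F p"
    by (rule F_above_tangent[OF ztK p])
  moreover have "p - zt = - (zt - p)" by simp
  then have "gF zt \<bullet> (p - zt) = - t * (gF zt \<bullet> (z - p))" unfolding zt_p by simp
  moreover have "0 \<le> mu / 2 * (norm (p - zt))\<^sup>2" using mu_pos by simp
  ultimately have F_zt: "F zt \<le> F p + t * (gF zt \<bullet> (z - p))" by linarith
  have "(gF zt - gF p) \<bullet> (z - p) \<le> norm (gF zt - gF p) * norm (z - p)"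
    by (rule Cauchy_Schwarz_ineq2[THEN abs_le_D1])
  also have "\<dots> \<le> Lg * norm (zt - p) * norm (z - p)"
    using lipschitz_on_normD[OF gF_lipschitz ztK p] by (intro mult_right_mono) auto
  also have "\<dots> = t * (Lg * (norm (z - p))\<^sup>2)"
    using t unfolding zt_p by (simp add: power2_eq_square)
  finally have "t * (gF zt \<bullet> (z - p)) \<le> t * (gF p \<bullet> (z - p)) + t\<^sup>2 * (Lg * (norm (z - p))\<^sup>2)"
    using t mult_left_mono[of _ _ t] by (fastforce simp: inner_diff_left power2_eq_square algebra_simps)
  moreover have "G zt \<le> (1 - t) * G p + t * G z"
    unfolding zt_def using t p z by (intro convex_onD[OF G_convex]) auto
  ultimately show ?thesis using Umin_le[OF ztK] F_zt by linarith
qed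

lemma variational_inequality:
  assumes z: "z \<in> K"
  shows "0 \<le> gF xstar \<bullet> (z - xstar) + G z - Gstar"
proof -
  define Q where "Q t = gF xstar \<bullet> (z - xstar) + G z - Gstar + t * (Lg * (norm (z - xstar))\<^sup>2)" for t
  have ev: "\<forall>\<^sub>F t in at_right 0. 0 \<le> Q t"
    using eventually_at_right_real[OF zero_less_one]
  proof eventually_elim
    case (elim t)
    have "Umin \<le> (F xstar + t * (gF xstar \<bullet> (z - xstar)) + t\<^sup>2 * (Lg * (norm (z - xstar))\<^sup>2) + t * G z)
        + (1 - t) * Gstar"
      using elim Umin_le_along_segment[OF _ z, of _ t]
      by (intro le_at_xstar continuous_intros F_continuous lipschitz_on_continuous_on[OF gF_lipschitz])
         (auto simp: add.assoc)
    then have "0 \<le> t * Q t" unfolding Q_def Gstar_def by (simp add: power2_eq_square algebra_simps)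
    with elim show ?case by (simp add: zero_le_mult_iff)
  qed
  have "(Q \<longlongrightarrow> Q 0) (at_right 0)" unfolding Q_def by (intro tendsto_intros)
  from this ev have "0 \<le> Q 0"
    by (rule tendsto_lowerbound) (simp add: trivial_limit_def[symmetric])
  then show ?thesis by (simp add: Q_def)
qed

lemma quadratic_growth: "z \<in> K \<Longrightarrow> mu / 2 * (norm (z - xstar))\<^sup>2 \<le> F z + G z - Umin"
  using F_above_tangent[OF xstar_in_K, of z] variational_inequality[of z] unfolding Gstar_def by linarith

end

section \<open>SONATA\<close>

lemma sum_power2_le_of_pointwise_bound:
  fixes d e q :: "nat \<Rightarrow> real" and A M Lq :: real and m :: nat
  assumes m: "0 < m" and d0: "\<And>i. i < m \<Longrightarrow> 0 \<le> d i"
    and d: "\<And>i. i < m \<Longrightarrow> d i \<le> A * e i + M * q i + Lq * (e i + (\<Sum>j<m. e j) / real m)"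
  shows "(\<Sum>i<m. (d i)\<^sup>2) \<le> 3 * (A\<^sup>2 + 4 * Lq\<^sup>2) * (\<Sum>i<m. (e i)\<^sup>2) + 3 * M\<^sup>2 * (\<Sum>i<m. (q i)\<^sup>2)"
proof -
  define avg where "avg = (\<Sum>j<m. e j) / real m"
  have power2_sum3: "(a + b + c)\<^sup>2 \<le> 3 * (a\<^sup>2 + b\<^sup>2 + c\<^sup>2)" for a b c :: real
    using zero_le_power2[of "a - b"] zero_le_power2[of "b - c"] zero_le_power2[of "a - c"]
    by (simp add: power2_eq_square algebra_simps)
  have power2_sum2: "(a + b)\<^sup>2 \<le> 2 * (a\<^sup>2 + b\<^sup>2)" for a b :: real
    using zero_le_power2[of "a - b"] by (simp add: power2_eq_square algebra_simps)
  have pointwise: "(d i)\<^sup>2 \<le> 3 * A\<^sup>2 * (e i)\<^sup>2 + 3 * M\<^sup>2 * (q i)\<^sup>2 + 6 * Lq\<^sup>2 * ((e i)\<^sup>2 + avg\<^sup>2)"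
    if i: "i < m" for i
  proof -
    have "(d i)\<^sup>2 \<le> (A * e i + M * q i + Lq * (e i + avg))\<^sup>2"
      using d[OF i] d0[OF i] unfolding avg_def by (intro power_mono) auto
    also have "\<dots> \<le> 3 * ((A * e i)\<^sup>2 + (M * q i)\<^sup>2 + Lq\<^sup>2 * (e i + avg)\<^sup>2)"
      using power2_sum3[of "A * e i" "M * q i" "Lq * (e i + avg)"] by (simp add: power_mult_distrib)
    also have "Lq\<^sup>2 * (e i + avg)\<^sup>2 \<le> Lq\<^sup>2 * (2 * ((e i)\<^sup>2 + avg\<^sup>2))"
      by (intro mult_left_mono power2_sum2) auto
    finally show ?thesis by (simp add: power_mult_distrib algebra_simps)
  qed
  have "real m * avg\<^sup>2 \<le> (\<Sum>i<m. (e i)\<^sup>2)"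
    using sum_squared_le_sum_of_squares[of e "{..<m}"] m
    by (simp add: avg_def power_divide power2_eq_square field_simps)
  then have "Lq\<^sup>2 * ((\<Sum>i<m. (e i)\<^sup>2) + real m * avg\<^sup>2) \<le> Lq\<^sup>2 * (2 * (\<Sum>i<m. (e i)\<^sup>2))"
    by (intro mult_left_mono) auto
  then have "(\<Sum>i<m. 6 * Lq\<^sup>2 * ((e i)\<^sup>2 + avg\<^sup>2)) \<le> 12 * Lq\<^sup>2 * (\<Sum>i<m. (e i)\<^sup>2)"
    by (simp add: sum.distrib sum_distrib_left[symmetric] algebra_simps)
  moreover have "(\<Sum>i<m. (d i)\<^sup>2) \<le> 3 * A\<^sup>2 * (\<Sum>i<m. (e i)\<^sup>2) + 3 * M\<^sup>2 * (\<Sum>i<m. (q i)\<^sup>2)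
      + (\<Sum>i<m. 6 * Lq\<^sup>2 * ((e i)\<^sup>2 + avg\<^sup>2))"
    using sum_mono[of "{..<m}", OF pointwise] by (simp add: sum.distrib sum_distrib_left)
  ultimately show ?thesis by (simp add: algebra_simps)
qed

locale sonata = push_sum m E B c cl phi
  for m :: nat and E B c cl and phi :: "nat \<Rightarrow> nat \<Rightarrow> real" +
  fixes K Ob :: "'a::euclidean_space set"
    and f :: "nat \<Rightarrow> 'a \<Rightarrow> real" and gradf :: "nat \<Rightarrow> 'a \<Rightarrow> 'a" and Hf :: "nat \<Rightarrow> 'a \<Rightarrow> 'a \<Rightarrow> 'a"
    and HF :: "'a \<Rightarrow> 'a \<Rightarrow> 'a" and G :: "'a \<Rightarrow> real" and mu :: real and Li :: "nat \<Rightarrow> real"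
    and ft :: "nat \<Rightarrow> 'a \<Rightarrow> 'a \<Rightarrow> real" and gradft :: "nat \<Rightarrow> 'a \<Rightarrow> 'a \<Rightarrow> 'a"
    and Hft :: "nat \<Rightarrow> 'a \<Rightarrow> 'a \<Rightarrow> 'a \<Rightarrow> 'a" and Lt mut Dl Du :: "nat \<Rightarrow> real"
    and alpha :: real and x xhat y :: "nat \<Rightarrow> nat \<Rightarrow> 'a"
  assumes HF_def: "HF = (\<lambda>z v. (1 / real m) *\<^sub>R (\<Sum>i<m. Hf i z v))"
    and K_ne: "K \<noteq> {}" and K_closed: "closed K" and K_convex: "convex K"
    and O_open: "open Ob" and K_sub_O: "K \<subseteq> Ob"
    and f_grad: "\<And>i z. i < m \<Longrightarrow> z \<in> Ob \<Longrightarrow> (f i has_derivative (\<lambda>h. gradf i z \<bullet> h)) (at z)"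
    and f_hess: "\<And>i z. i < m \<Longrightarrow> z \<in> Ob \<Longrightarrow> (gradf i has_derivative Hf i z) (at z)"
    and f_convex: "\<And>i. i < m \<Longrightarrow> convex_on Ob (f i)"
    and mu_pos: "0 < mu"
    and HF_lower: "\<And>z v. z \<in> K \<Longrightarrow> mu * (norm v)\<^sup>2 \<le> v \<bullet> HF z v"
    and G_convex: "convex_on K G"
    and Hf_upper: "\<And>i z v. i < m \<Longrightarrow> z \<in> K \<Longrightarrow> v \<bullet> Hf i z v \<le> Li i * (norm v)\<^sup>2"
    and ft_grad: "\<And>i u w. i < m \<Longrightarrow> u \<in> Ob \<Longrightarrow> w \<in> Ob \<Longrightarrow>
                    ((\<lambda>z. ft i z w) has_derivative (\<lambda>h. gradft i u w \<bullet> h)) (at u)"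
    and ft_hess: "\<And>i u w. i < m \<Longrightarrow> u \<in> Ob \<Longrightarrow> w \<in> Ob \<Longrightarrow>
                    ((\<lambda>z. gradft i z w) has_derivative Hft i u w) (at u)"
    and ft_consistent: "\<And>i z. i < m \<Longrightarrow> z \<in> K \<Longrightarrow> gradft i z z = gradf i z"
    and ft_lipschitz: "\<And>i w. i < m \<Longrightarrow> w \<in> K \<Longrightarrow> lipschitz_on (Lt i) K (\<lambda>z. gradft i z w)"
    and ft_strong: "\<And>i w. i < m \<Longrightarrow> w \<in> K \<Longrightarrow> strongly_convex_on K (mut i) (\<lambda>z. ft i z w)"
    and mut_pos: "\<And>i. i < m \<Longrightarrow> 0 < mut i"
    and D_bounds: "\<And>i u w v. i < m \<Longrightarrow> u \<in> K \<Longrightarrow> w \<in> K \<Longrightarrow>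
                    Dl i * (norm v)\<^sup>2 \<le> v \<bullet> (Hft i u w v - HF u v) \<and>
                    v \<bullet> (Hft i u w v - HF u v) \<le> Du i * (norm v)\<^sup>2"
    and alpha_pos: "0 < alpha" and alpha_le1: "alpha \<le> 1"
    and x0: "\<And>i. i < m \<Longrightarrow> x 0 i \<in> K"
    and y0: "\<And>i. i < m \<Longrightarrow> y 0 i = gradf i (x 0 i)"
    and xhat_def: "\<And>n i. i < m \<Longrightarrow> xhat n i \<in> K \<and>
        (\<forall>z\<in>K. ft i (xhat n i) (x n i) + (y n i - gradf i (x n i)) \<bullet> (xhat n i - x n i) + G (xhat n i)
              \<le> ft i z (x n i) + (y n i - gradf i (x n i)) \<bullet> (z - x n i) + G z)"
    and x_upd: "\<And>n i. i < m \<Longrightarrow> x (Suc n) i =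
        (1 / phi (Suc n) i) *\<^sub>R (\<Sum>j<m. (c n i j * phi n j) *\<^sub>R (x n j + alpha *\<^sub>R (xhat n j - x n j)))"
    and y_upd: "\<And>n i. i < m \<Longrightarrow> y (Suc n) i =
        (1 / phi (Suc n) i) *\<^sub>R (\<Sum>j<m. c n i j *\<^sub>R (phi n j *\<^sub>R y n j + gradf j (x (Suc n) j) - gradf j (x n j)))"
begin

definition F :: "'a \<Rightarrow> real" where "F z = (\<Sum>i<m. f i z) / real m"
definition gF :: "'a \<Rightarrow> 'a" where "gF z = (1 / real m) *\<^sub>R (\<Sum>i<m. gradf i z)"
definition Lmax :: real where "Lmax = Max (Li ` {..<m})"
definition Dmax :: real where "Dmax = Max ((\<lambda>i. max \<bar>Dl i\<bar> \<bar>Du i\<bar>) ` {..<m})"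
definition mumin :: real where "mumin = Min (mut ` {..<m})"

lemma xhat_in_K: "i < m \<Longrightarrow> xhat n i \<in> K"
  using xhat_def by blast

lemma x_in_K: "i < m \<Longrightarrow> x n i \<in> K"
proof (induction n arbitrary: i)
  case (Suc n)
  define z where "z j = x n j + alpha *\<^sub>R (xhat n j - x n j)" for j
  have zK: "z j \<in> K" if "j < m" for j
    using convexD_alt[OF K_convex Suc.IH[OF that] xhat_in_K[OF that], of alpha] alpha_pos alpha_le1
    unfolding z_def by (simp add: algebra_simps)
  have "x (Suc n) i = (\<Sum>j<m. (c n i j * phi n j / phi (Suc n) i) *\<^sub>R z j)"
    unfolding x_upd[OF Suc.prems] z_def by (simp add: scaleR_sum_right)
  also have "\<dots> \<in> K"
  proof (rule convex_sum[OF finite_lessThan K_convex])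
    show "(\<Sum>j<m. c n i j * phi n j / phi (Suc n) i) = 1"
      using phi_pos[OF Suc.prems, of "Suc n"] phi_upd[OF Suc.prems] by (simp add: sum_divide_distrib[symmetric])
    show "0 \<le> c n i j * phi n j / phi (Suc n) i" if "j \<in> {..<m}" for j
      using that Suc.prems phi_pos c_nonneg by (simp add: less_imp_le)
  qed (use zK in auto)
  finally show ?case .
qed (use x0 in simp)

lemma sum_phi_y: "(\<Sum>i<m. phi n i *\<^sub>R y n i) = (\<Sum>i<m. gradf i (x n i))"
proof (induction n)
  case (Suc n)
  define g where "g j = phi n j *\<^sub>R y n j + gradf j (x (Suc n) j) - gradf j (x n j)" for j
  have "(\<Sum>i<m. phi (Suc n) i *\<^sub>R y (Suc n) i) = (\<Sum>i<m. \<Sum>j<m. c n i j *\<^sub>R g j)"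
    using phi_pos by (intro sum.cong) (simp_all add: y_upd g_def scaleR_sum_right less_imp_neq[symmetric])
  also have "\<dots> = (\<Sum>j<m. \<Sum>i<m. c n i j *\<^sub>R g j)" by (rule sum.swap)
  also have "\<dots> = (\<Sum>j<m. g j)" using c_colstoch by (simp add: scaleR_sum_left[symmetric])
  finally show ?case using Suc by (simp add: g_def sum.distrib sum_subtractf)
qed (simp add: phi0 y0)

lemma F_has_derivative: "z \<in> Ob \<Longrightarrow> (F has_derivative (\<lambda>h. gF z \<bullet> h)) (at z)"
proof -
  assume z: "z \<in> Ob"
  have "((\<lambda>z. \<Sum>i<m. f i z) has_derivative (\<lambda>h. \<Sum>i<m. gradf i z \<bullet> h)) (at z)"
    using f_grad z by (intro has_derivative_sum) auto
  then have "(F has_derivative (\<lambda>h. (\<Sum>i<m. gradf i z \<bullet> h) / real m)) (at z)"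
    unfolding F_def[abs_def] by (rule bounded_linear.has_derivative[OF bounded_linear_divide])
  then show ?thesis by (simp add: gF_def inner_sum_left)
qed

lemma gF_has_derivative: "z \<in> Ob \<Longrightarrow> (gF has_derivative HF z) (at z)"
  unfolding gF_def[abs_def] HF_def
  by (intro has_derivative_scaleR_right has_derivative_sum) (use f_hess in auto)

lemma Hf_symmetric: "i < m \<Longrightarrow> z \<in> Ob \<Longrightarrow> Hf i z u \<bullet> v = Hf i z v \<bullet> u"
  by (rule second_derivative_symmetric[OF O_open _ f_grad f_hess])

lemma HF_symmetric: "z \<in> Ob \<Longrightarrow> HF z u \<bullet> v = HF z v \<bullet> u"
  by (rule second_derivative_symmetric[OF O_open _ F_has_derivative gF_has_derivative])

lemma Hft_symmetric: "i < m \<Longrightarrow> u \<in> Ob \<Longrightarrow> w \<in> Ob \<Longrightarrow> Hft i u w a \<bullet> b = Hft i u w b \<bullet> a"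
  by (rule second_derivative_symmetric[where g = "\<lambda>z. ft i z w", OF O_open _ ft_grad ft_hess])

lemma gradf_monotone: "i < m \<Longrightarrow> p \<in> Ob \<Longrightarrow> q \<in> Ob \<Longrightarrow> 0 \<le> (gradf i p - gradf i q) \<bullet> (p - q)"
  using strongly_convex_on_imp_above_tangent[OF convex_on_imp_strongly_convex_on_0[OF f_convex] _ _ f_grad,
      of i p q]
    strongly_convex_on_imp_above_tangent[OF convex_on_imp_strongly_convex_on_0[OF f_convex] _ _ f_grad,
      of i q p]
  by (simp add: inner_diff_left inner_diff_right)

lemma Hf_psd: "i < m \<Longrightarrow> z \<in> Ob \<Longrightarrow> 0 \<le> v \<bullet> Hf i z v"
  by (rule hessian_psd_of_monotone_gradient[OF O_open _ f_hess]) (auto intro: gradf_monotone)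

lemma Li_nonneg: "i < m \<Longrightarrow> 0 \<le> Li i"
proof -
  assume i: "i < m"
  obtain z where z: "z \<in> K" using K_ne by blast
  obtain b :: 'a where b: "b \<in> Basis" using nonempty_Basis by blast
  have "0 \<le> b \<bullet> Hf i z b" using Hf_psd[OF i] z K_sub_O by blast
  also have "\<dots> \<le> Li i * (norm b)\<^sup>2" using Hf_upper[OF i z] .
  finally show ?thesis using b by simp
qed

lemma Li_le_Lmax: "i < m \<Longrightarrow> Li i \<le> Lmax"
  unfolding Lmax_def by (rule Max_ge) auto

lemma Lmax_nonneg: "0 \<le> Lmax"
  using Li_le_Lmax[OF m_pos] Li_nonneg[OF m_pos] by simp

lemma gradf_lipschitz:
  assumes i: "i < m" and a: "a \<in> K" and b: "b \<in> K"
  shows "norm (gradf i a - gradf i b) \<le> Lmax * norm (a - b)"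
proof -
  have "norm (Hf i z v) \<le> Li i * norm v" if z: "z \<in> K" for z v
  proof -
    have zO: "z \<in> Ob" using z K_sub_O by blast
    have "linear (Hf i z)"
      using f_hess[OF i zO] by (simp add: has_derivative_at_alt bounded_linear.linear)
    then have "norm (Hf i z v) \<le> max \<bar>0\<bar> \<bar>Li i\<bar> * norm v"
      by (rule norm_le_of_quadratic_form_bounds)
         (use Hf_symmetric[OF i zO] Hf_psd[OF i zO] Hf_upper[OF i z] in auto)
    then show ?thesis using Li_nonneg[OF i] by simp
  qed
  then have "norm (gradf i a - gradf i b) \<le> Li i * norm (a - b)"
    using f_hess[OF i] K_sub_O by (intro norm_diff_le_of_derivative_bound[OF K_convex _ _ a b]) auto
  also have "\<dots> \<le> Lmax * norm (a - b)" using Li_le_Lmax[OF i] by (simp add: mult_right_mono)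
  finally show ?thesis .
qed

lemma gF_lipschitz: "lipschitz_on Lmax K gF"
proof (rule lipschitz_onI[OF _ Lmax_nonneg])
  fix a b assume a: "a \<in> K" and b: "b \<in> K"
  have "norm (gF a - gF b) = norm (\<Sum>i<m. gradf i a - gradf i b) / real m"
    unfolding gF_def by (simp add: sum_subtractf flip: scaleR_diff_right)
  also have "\<dots> \<le> (\<Sum>i<m. norm (gradf i a - gradf i b)) / real m"
    by (intro divide_right_mono norm_sum) auto
  also have "\<dots> \<le> (\<Sum>i<m. Lmax * norm (a - b)) / real m"
    by (intro divide_right_mono sum_mono gradf_lipschitz a b) auto
  also have "\<dots> = Lmax * norm (a - b)" using m_pos by simp
  finally show "dist (gF a) (gF b) \<le> Lmax * dist a b" by (simp add: dist_norm)
qed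

lemma Dmax_ge: "i < m \<Longrightarrow> max \<bar>Dl i\<bar> \<bar>Du i\<bar> \<le> Dmax"
  unfolding Dmax_def by (rule Max_ge) auto

lemma Dmax_nonneg: "0 \<le> Dmax"
  using Dmax_ge[OF m_pos] by linarith

lemma mumin_pos: "0 < mumin"
  unfolding mumin_def using mut_pos m_pos by (subst Min_gr_iff) auto

lemma mumin_le: "i < m \<Longrightarrow> mumin \<le> mut i"
  unfolding mumin_def by (rule Min_le) auto

lemma gradft_minus_gF_lipschitz:
  assumes i: "i < m" and w: "w \<in> K" and a: "a \<in> K" and b: "b \<in> K"
  shows "norm ((gradft i a w - gF a) - (gradft i b w - gF b)) \<le> Dmax * norm (a - b)"
proof (rule norm_diff_le_of_derivative_bound[OF K_convex _ _ a b])
  have wO: "w \<in> Ob" using w K_sub_O by blast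
  show "((\<lambda>z. gradft i z w - gF z) has_derivative (\<lambda>v. Hft i z w v - HF z v)) (at z)" if "z \<in> K" for z
    using that K_sub_O by (intro has_derivative_diff ft_hess[OF i _ wO] gF_has_derivative) auto
  show "norm (Hft i z w v - HF z v) \<le> Dmax * norm v" if z: "z \<in> K" for z v
  proof -
    have zO: "z \<in> Ob" using z K_sub_O by blast
    have "linear (\<lambda>v. Hft i z w v - HF z v)"
      using ft_hess[OF i zO wO] gF_has_derivative[OF zO]
      by (intro linear_compose_sub bounded_linear.linear) (auto simp: has_derivative_at_alt)
    then have "norm (Hft i z w v - HF z v) \<le> max \<bar>Dl i\<bar> \<bar>Du i\<bar> * norm v"
    proof (rule norm_le_of_quadratic_form_bounds)
      show "(Hft i z w u - HF z u) \<bullet> v' = (Hft i z w v' - HF z v') \<bullet> u" for u v'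
        using Hft_symmetric[OF i zO wO, of u v'] HF_symmetric[OF zO, of u v'] by (simp add: inner_diff_left)
    qed (use D_bounds[OF i z w] in auto)
    also have "\<dots> \<le> Dmax * norm v" using Dmax_ge[OF i] by (simp add: mult_right_mono)
    finally show ?thesis .
  qed
qed

lemma F_above_tangent: "a \<in> K \<Longrightarrow> b \<in> K \<Longrightarrow> F a + gF a \<bullet> (b - a) + mu / 2 * (norm (b - a))\<^sup>2 \<le> F b"
  using F_has_derivative gF_has_derivative K_sub_O HF_lower
  by (intro above_tangent_of_hessian_lower_bound[OF K_convex, where HF = HF]) auto

lemma ft_above_tangent:
  "i < m \<Longrightarrow> w \<in> K \<Longrightarrow> a \<in> K \<Longrightarrow> b \<in> K \<Longrightarrow>
   ft i a w + gradft i a w \<bullet> (b - a) + mut i / 2 * (norm (b - a))\<^sup>2 \<le> ft i b w"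
  by (rule strongly_convex_on_imp_above_tangent[OF ft_strong]) (use ft_grad K_sub_O in auto)

definition surrogate :: "nat \<Rightarrow> nat \<Rightarrow> 'a \<Rightarrow> real" where
  "surrogate n i z = ft i z (x n i) + (y n i - gradf i (x n i)) \<bullet> (z - x n i) + G z"

lemma surrogate_strongly_convex: "i < m \<Longrightarrow> strongly_convex_on K (mut i) (surrogate n i)"
proof -
  assume i: "i < m"
  have "convex_on K (\<lambda>z. a \<bullet> (z - w))" for a w :: 'a
  proof (rule convex_onI[OF _ K_convex])
    fix t :: real and p q assume "0 < t" "t < 1"
    have "(1 - t) *\<^sub>R p + t *\<^sub>R q - w = (1 - t) *\<^sub>R (p - w) + t *\<^sub>R (q - w)"
      by (simp add: algebra_simps)
    then show "a \<bullet> ((1 - t) *\<^sub>R p + t *\<^sub>R q - w) \<le> (1 - t) * (a \<bullet> (p - w)) + t * (a \<bullet> (q - w))"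
      by (simp add: inner_add_right)
  qed
  then have "convex_on K (\<lambda>z. (y n i - gradf i (x n i)) \<bullet> (z - x n i) + G z)"
    using G_convex by (rule convex_on_add)
  then show ?thesis
    unfolding surrogate_def[abs_def] add.assoc
    by (rule strongly_convex_on_add_convex_on[OF ft_strong[OF i x_in_K[OF i]]])
qed

lemma surrogate_growth:
  "i < m \<Longrightarrow> z \<in> K \<Longrightarrow> surrogate n i (xhat n i) + mut i / 2 * (norm (z - xhat n i))\<^sup>2 \<le> surrogate n i z"
  by (rule strongly_convex_on_minimizer_growth[OF K_convex surrogate_strongly_convex xhat_in_K])
     (use xhat_def in \<open>auto simp: surrogate_def\<close>)

lemma G_ge_near_xhat:
  assumes i: "i < m" and w: "w \<in> K" "norm (w - xhat n i) \<le> 1"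
  shows "G (xhat n i) - (norm (gradft i (xhat n i) (x n i)) + Lt i + norm (y n i - gradf i (x n i))) \<le> G w"
proof -
  define h xi cv where "h = xhat n i" and "xi = x n i" and "cv = y n i - gradf i xi"
  have hK: "h \<in> K" and xiK: "xi \<in> K" unfolding h_def xi_def using xhat_in_K x_in_K i by auto
  have wh: "norm (h - w) \<le> 1" using w(2) by (simp add: h_def norm_minus_commute)
  have "ft i w xi + gradft i w xi \<bullet> (h - w) + mut i / 2 * (norm (h - w))\<^sup>2 \<le> ft i h xi"
    by (rule ft_above_tangent[OF i xiK w(1) hK])
  moreover have "0 \<le> mut i / 2 * (norm (h - w))\<^sup>2" using mut_pos[OF i] by simp
  moreover have "- (gradft i w xi \<bullet> (h - w)) \<le> norm (gradft i h xi) + Lt i"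
  proof -
    have "norm (gradft i w xi - gradft i h xi) \<le> Lt i * norm (w - h)"
      by (rule lipschitz_on_normD[OF ft_lipschitz[OF i xiK] w(1) hK])
    also have "\<dots> \<le> Lt i"
      using w(2) lipschitz_on_nonneg[OF ft_lipschitz[OF i xiK]] by (simp add: h_def mult_left_le)
    finally have "norm (gradft i w xi) \<le> norm (gradft i h xi) + Lt i" by norm
    moreover have "- (gradft i w xi \<bullet> (h - w)) \<le> norm (gradft i w xi) * norm (h - w)"
      using Cauchy_Schwarz_ineq2[of "gradft i w xi" "h - w"] by linarith
    moreover have "norm (gradft i w xi) * norm (h - w) \<le> norm (gradft i w xi)"
      using wh by (simp add: mult_left_le)
    ultimately show ?thesis by linarith
  qed
  moreover have "cv \<bullet> (w - xi) \<le> cv \<bullet> (h - xi) + norm cv"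
  proof -
    have "cv \<bullet> (w - h) \<le> norm cv * norm (w - h)" using Cauchy_Schwarz_ineq2[of cv "w - h"] by linarith
    also have "\<dots> \<le> norm cv" using w(2) by (simp add: h_def mult_left_le)
    finally show ?thesis by (simp add: inner_diff_right)
  qed
  moreover have "ft i h xi + cv \<bullet> (h - xi) + G h \<le> ft i w xi + cv \<bullet> (w - xi) + G w"
    using xhat_def[OF i, of n] w(1) unfolding h_def xi_def cv_def by blast
  ultimately show ?thesis unfolding h_def xi_def cv_def by linarith
qed

lemma G_lower_bound:
  obtains h C where "h \<in> K" "0 \<le> C" "\<And>z. z \<in> K \<Longrightarrow> G h - C - C * norm (z - h) \<le> G z"
proof -
  define C where "C = norm (gradft 0 (xhat 0 0) (x 0 0)) + Lt 0 + norm (y 0 0 - gradf 0 (x 0 0))"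
  have C: "0 \<le> C"
    unfolding C_def using lipschitz_on_nonneg[OF ft_lipschitz[OF m_pos x_in_K[OF m_pos]]] by simp
  have "G (xhat 0 0) - C \<le> G w" if "w \<in> K" "norm (w - xhat 0 0) \<le> 1" for w
    using G_ge_near_xhat[OF m_pos that] unfolding C_def .
  from convex_on_lower_bound_of_unit_ball_bound[OF K_convex G_convex xhat_in_K[OF m_pos] C this]
  show ?thesis by (rule that[OF xhat_in_K[OF m_pos] C])
qed

lemma bdd_below_F_plus_G: "bdd_below ((\<lambda>z. F z + G z) ` K)"
proof -
  obtain h C where hK: "h \<in> K" and C: "0 \<le> C" and G_lb: "\<And>z. z \<in> K \<Longrightarrow> G h - C - C * norm (z - h) \<le> G z"
    using G_lower_bound by blast
  define b where "b = C + norm (gF h)"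
  have "F h + G h - C - b\<^sup>2 / (2 * mu) \<le> F z + G z" if z: "z \<in> K" for z
  proof -
    define r where "r = norm (z - h)"
    have "F h + gF h \<bullet> (z - h) + mu / 2 * r\<^sup>2 \<le> F z" unfolding r_def by (rule F_above_tangent[OF hK z])
    moreover have "- (norm (gF h) * r) \<le> gF h \<bullet> (z - h)"
      using Cauchy_Schwarz_ineq2[of "gF h" "z - h"] unfolding r_def by linarith
    moreover have "- b\<^sup>2 / (2 * mu) \<le> mu / 2 * r\<^sup>2 - b * r"
    proof -
      have "0 \<le> (mu * r - b)\<^sup>2" by simp
      then show ?thesis using mu_pos by (simp add: field_simps power2_eq_square)
    qed
    ultimately show ?thesis using G_lb[OF z] unfolding r_def b_def by (simp add: algebra_simps)
  qed
  then show ?thesis by (intro bdd_belowI2)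
qed

sublocale cp: composite_problem K F G gF mu Lmax
proof
  show "continuous_on K F"
    using F_has_derivative K_sub_O
    by (intro has_derivative_continuous_on[OF has_derivative_at_withinI]) auto
qed (use K_ne K_closed K_convex mu_pos gF_lipschitz F_above_tangent G_convex bdd_below_F_plus_G in auto)

lemma xhat_dist_xstar_le:
  assumes i: "i < m"
  shows "mut i * norm (xhat n i - cp.xstar)
    \<le> norm (gradft i cp.xstar (x n i) + (y n i - gradf i (x n i)) - gF cp.xstar)"
proof -
  define h xi cv xb where "h = xhat n i" and "xi = x n i" and "cv = y n i - gradf i (x n i)"
    and "xb = cp.xstar"
  define R w where "R = norm (h - xb)" and "w = gradft i xb xi + cv - gF xb"
  have hK: "h \<in> K" and xiK: "xi \<in> K" and xbK: "xb \<in> K"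
    unfolding h_def xi_def xb_def using xhat_in_K x_in_K cp.xstar_in_K i by auto
  have "continuous_on K (\<lambda>z. ft i z xi)"
    using ft_grad[OF i _ subsetD[OF K_sub_O xiK]] K_sub_O
    by (intro has_derivative_continuous_on[OF has_derivative_at_withinI]) auto
  then have cont: "continuous_on K (\<lambda>z. ft i z xi + cv \<bullet> (z - xi) - mut i / 2 * (norm (z - h))\<^sup>2)"
    by (intro continuous_intros)
  have "surrogate n i h \<le> ft i xb xi + cv \<bullet> (xb - xi) - mut i / 2 * (norm (xb - h))\<^sup>2 + 1 * cp.Gstar"
    unfolding xb_def
  proof (rule cp.le_at_xstar[OF cont])
    fix p assume "p \<in> K"
    then show "surrogate n i h \<le> ft i p xi + cv \<bullet> (p - xi) - mut i / 2 * (norm (p - h))\<^sup>2 + 1 * G p"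
      using surrogate_growth[OF i, of p n] unfolding surrogate_def h_def xi_def cv_def by linarith
  qed simp
  then have "surrogate n i h + mut i / 2 * R\<^sup>2 \<le> ft i xb xi + cv \<bullet> (xb - xi) + cp.Gstar"
    by (simp add: R_def norm_minus_commute)
  moreover have "0 \<le> gF xb \<bullet> (h - xb) + G h - cp.Gstar"
    unfolding xb_def by (rule cp.variational_inequality[OF hK])
  moreover have "ft i xb xi + gradft i xb xi \<bullet> (h - xb) + mut i / 2 * R\<^sup>2 \<le> ft i h xi"
    unfolding R_def by (rule ft_above_tangent[OF i xiK xbK hK])
  moreover have "cv \<bullet> (h - xi) = cv \<bullet> (xb - xi) + cv \<bullet> (h - xb)"
    by (simp add: inner_diff_right)
  ultimately have "mut i * R\<^sup>2 \<le> - (w \<bullet> (h - xb))"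
    unfolding surrogate_def w_def h_def xi_def cv_def by (simp add: inner_add_left inner_diff_left)
  also have "\<dots> \<le> norm w * R"
    unfolding R_def using Cauchy_Schwarz_ineq2[of w "h - xb"] by linarith
  finally have "R * (mut i * R) \<le> R * norm w" by (simp add: power2_eq_square algebra_simps)
  then have "mut i * R \<le> norm w"
    using mut_pos[OF i] by (cases "R = 0") (auto simp: R_def)
  then show ?thesis unfolding R_def w_def h_def xi_def cv_def xb_def .
qed

lemma norm_avg_y_minus_gF_le:
  assumes z: "z \<in> K" and w: "w \<in> K"
  shows "norm ((1 / real m) *\<^sub>R (\<Sum>j<m. phi n j *\<^sub>R y n j) - gF z)
    \<le> Lmax * (norm (z - w) + (\<Sum>j<m. norm (x n j - w)) / real m)"
proof -
  have "(1 / real m) *\<^sub>R (\<Sum>j<m. phi n j *\<^sub>R y n j) - gF z = (1 / real m) *\<^sub>R (\<Sum>j<m. gradf j (x n j) - gradf j z)"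
    unfolding sum_phi_y gF_def by (simp add: sum_subtractf scaleR_diff_right)
  then have "norm ((1 / real m) *\<^sub>R (\<Sum>j<m. phi n j *\<^sub>R y n j) - gF z)
      \<le> (\<Sum>j<m. norm (gradf j (x n j) - gradf j z)) / real m"
    using norm_sum[of "\<lambda>j. gradf j (x n j) - gradf j z" "{..<m}"] by (simp add: divide_right_mono)
  also have "\<dots> \<le> (\<Sum>j<m. Lmax * (norm (x n j - w) + norm (z - w))) / real m"
  proof (intro divide_right_mono sum_mono)
    fix j assume "j \<in> {..<m}"
    then have "norm (gradf j (x n j) - gradf j z) \<le> Lmax * norm (x n j - z)"
      using gradf_lipschitz x_in_K z by simp
    also have "\<dots> \<le> Lmax * (norm (x n j - w) + norm (z - w))"
      using norm_triangle_ineq4[of "x n j - w" "z - w"] Lmax_nonneg by (intro mult_left_mono) auto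
    finally show "norm (gradf j (x n j) - gradf j z) \<le> Lmax * (norm (x n j - w) + norm (z - w))" .
  qed simp
  also have "\<dots> = Lmax * (norm (z - w) + (\<Sum>j<m. norm (x n j - w)) / real m)"
    using m_pos by (simp add: sum.distrib sum_distrib_left field_simps)
  finally show ?thesis .
qed

lemma norm_gradient_mismatch_le:
  fixes n i :: nat
  assumes i: "i < m"
  defines "e \<equiv> \<lambda>j. norm (x n j - cp.xstar)"
  shows "norm (gradft i cp.xstar (x n i) + (y n i - gradf i (x n i)) - gF cp.xstar)
    \<le> Dmax * e i + norm (y n i - (1 / real m) *\<^sub>R (\<Sum>j<m. phi n j *\<^sub>R y n j))
      + Lmax * (e i + (\<Sum>j<m. e j) / real m)"
proof -
  define xi xb ybar where "xi = x n i" and "xb = cp.xstar"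
    and "ybar = (1 / real m) *\<^sub>R (\<Sum>j<m. phi n j *\<^sub>R y n j)"
  have xiK: "xi \<in> K" and xbK: "xb \<in> K" unfolding xi_def xb_def using x_in_K cp.xstar_in_K i by auto
  have eq: "gradft i xb xi + (y n i - gradf i xi) - gF xb
      = ((gradft i xb xi - gF xb) - (gradft i xi xi - gF xi)) + (y n i - ybar) + (ybar - gF xi)"
    using ft_consistent[OF i xiK] by (simp add: algebra_simps)
  have triangle3: "norm (a + b + c) \<le> norm a + norm b + norm c" for a b c :: 'a
    using norm_triangle_ineq[of "a + b" c] norm_triangle_ineq[of a b] by linarith
  have "norm (gradft i xb xi + (y n i - gradf i xi) - gF xb)
      \<le> norm ((gradft i xb xi - gF xb) - (gradft i xi xi - gF xi)) + norm (y n i - ybar) + norm (ybar - gF xi)"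
    unfolding eq by (rule triangle3)
  moreover have "norm ((gradft i xb xi - gF xb) - (gradft i xi xi - gF xi)) \<le> Dmax * e i"
    using gradft_minus_gF_lipschitz[OF i xiK xbK xiK] unfolding e_def xi_def xb_def
    by (simp add: norm_minus_commute)
  moreover have "norm (ybar - gF xi) \<le> Lmax * (e i + (\<Sum>j<m. e j) / real m)"
    using norm_avg_y_minus_gF_le[OF xiK xbK] unfolding ybar_def e_def xi_def xb_def by simp
  ultimately show ?thesis unfolding xi_def xb_def ybar_def by linarith
qed

lemma xhat_step_le:
  fixes n i :: nat
  assumes i: "i < m"
  defines "e \<equiv> \<lambda>j. norm (x n j - cp.xstar)"
  shows "norm (xhat n i - x n i) \<le> (Dmax / mumin + 1) * e i
      + 1 / mumin * norm (y n i - (1 / real m) *\<^sub>R (\<Sum>j<m. phi n j *\<^sub>R y n j))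
      + Lmax / mumin * (e i + (\<Sum>j<m. e j) / real m)"
proof -
  define q where "q = norm (y n i - (1 / real m) *\<^sub>R (\<Sum>j<m. phi n j *\<^sub>R y n j))"
  have "mumin * norm (xhat n i - cp.xstar) \<le> mut i * norm (xhat n i - cp.xstar)"
    using mumin_le[OF i] by (simp add: mult_right_mono)
  also have "\<dots> \<le> Dmax * e i + q + Lmax * (e i + (\<Sum>j<m. e j) / real m)"
    using order_trans[OF xhat_dist_xstar_le[OF i, of n] norm_gradient_mismatch_le[OF i, of n]]
    unfolding e_def q_def by simp
  finally have "norm (xhat n i - cp.xstar) \<le> (Dmax * e i + q + Lmax * (e i + (\<Sum>j<m. e j) / real m)) / mumin"
    using mumin_pos by (simp add: field_simps)
  moreover have "norm (xhat n i - x n i) \<le> norm (xhat n i - cp.xstar) + e i"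
    using norm_triangle_ineq[of "xhat n i - cp.xstar" "cp.xstar - x n i"]
    unfolding e_def by (simp add: norm_minus_commute)
  ultimately have "norm (xhat n i - x n i)
      \<le> (Dmax * e i + q + Lmax * (e i + (\<Sum>j<m. e j) / real m)) / mumin + e i"
    by linarith
  also have "\<dots> = (Dmax / mumin + 1) * e i + 1 / mumin * q + Lmax / mumin * (e i + (\<Sum>j<m. e j) / real m)"
    using mumin_pos by (simp add: field_simps)
  finally show ?thesis unfolding q_def .
qed

lemma sum_dist_xstar_power2_le:
  "(\<Sum>i<m. (norm (x n i - cp.xstar))\<^sup>2)
     \<le> 2 / (mu * phi_lb) * (\<Sum>i<m. phi n i * (F (x n i) + G (x n i) - cp.Umin))"
proof -
  have plb: "0 < phi_lb" unfolding phi_lb_def using cl_pos by simp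
  have "(norm (x n i - cp.xstar))\<^sup>2 \<le> 2 / (mu * phi_lb) * (phi n i * (F (x n i) + G (x n i) - cp.Umin))"
    if i: "i < m" for i
  proof -
    define D where "D = F (x n i) + G (x n i) - cp.Umin"
    have "mu / 2 * (norm (x n i - cp.xstar))\<^sup>2 \<le> D"
      unfolding D_def by (rule cp.quadratic_growth[OF x_in_K[OF i]])
    also have "D \<le> phi n i / phi_lb * D"
    proof -
      have "0 \<le> D" using cp.Umin_le[OF x_in_K[OF i]] unfolding D_def by simp
      moreover have "1 \<le> phi n i / phi_lb" using phi_ge_lower_bound[OF i, of n] plb by simp
      ultimately show ?thesis using mult_right_mono[of 1 "phi n i / phi_lb" D] by simp
    qed
    finally show ?thesis using mu_pos plb unfolding D_def by (simp add: field_simps)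
  qed
  then have "(\<Sum>i<m. (norm (x n i - cp.xstar))\<^sup>2)
      \<le> (\<Sum>i<m. 2 / (mu * phi_lb) * (phi n i * (F (x n i) + G (x n i) - cp.Umin)))"
    by (intro sum_mono) simp
  then show ?thesis by (simp add: sum_distrib_left)
qed

lemma sum_step_power2_le:
  "(\<Sum>i<m. (norm (xhat n i - x n i))\<^sup>2)
     \<le> 6 / (mu * phi_lb) * ((Dmax / mumin + 1)\<^sup>2 + 4 * Lmax\<^sup>2 / mumin\<^sup>2)
         * (\<Sum>i<m. phi n i * (F (x n i) + G (x n i) - cp.Umin))
       + 3 / mumin\<^sup>2 * (\<Sum>i<m. (norm (y n i - (1 / real m) *\<^sub>R (\<Sum>j<m. phi n j *\<^sub>R y n j)))\<^sup>2)"
proof -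
  define e q where "e i = norm (x n i - cp.xstar)"
    and "q i = norm (y n i - (1 / real m) *\<^sub>R (\<Sum>j<m. phi n j *\<^sub>R y n j))" for i
  define A where "A = 3 * ((Dmax / mumin + 1)\<^sup>2 + 4 * (Lmax / mumin)\<^sup>2)"
  have "(\<Sum>i<m. (norm (xhat n i - x n i))\<^sup>2) \<le> A * (\<Sum>i<m. (e i)\<^sup>2) + 3 * (1 / mumin)\<^sup>2 * (\<Sum>i<m. (q i)\<^sup>2)"
    unfolding A_def
    by (rule sum_power2_le_of_pointwise_bound[OF m_pos]) (use xhat_step_le in \<open>auto simp: e_def q_def\<close>)
  also have "\<dots> \<le> A * (2 / (mu * phi_lb) * (\<Sum>i<m. phi n i * (F (x n i) + G (x n i) - cp.Umin)))
      + 3 * (1 / mumin)\<^sup>2 * (\<Sum>i<m. (q i)\<^sup>2)"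
    using sum_dist_xstar_power2_le[of n] unfolding e_def A_def by (intro add_right_mono mult_left_mono) auto
  also have "\<dots> = 6 / (mu * phi_lb) * ((Dmax / mumin + 1)\<^sup>2 + 4 * Lmax\<^sup>2 / mumin\<^sup>2)
         * (\<Sum>i<m. phi n i * (F (x n i) + G (x n i) - cp.Umin)) + 3 / mumin\<^sup>2 * (\<Sum>i<m. (q i)\<^sup>2)"
    unfolding A_def by (simp add: power_divide)
  finally show ?thesis unfolding q_def .
qed

end

theorem proposition4p3:
  fixes m :: nat
    and K Ob :: "'a::euclidean_space set"
    and f :: "nat \<Rightarrow> 'a \<Rightarrow> real" and gradf :: "nat \<Rightarrow> 'a \<Rightarrow> 'a" and Hf :: "nat \<Rightarrow> 'a \<Rightarrow> 'a \<Rightarrow> 'a"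
    and G :: "'a \<Rightarrow> real"
    and mu L :: real and Li :: "nat \<Rightarrow> real"
    and ft :: "nat \<Rightarrow> 'a \<Rightarrow> 'a \<Rightarrow> real" and gradft :: "nat \<Rightarrow> 'a \<Rightarrow> 'a \<Rightarrow> 'a"
    and Hft :: "nat \<Rightarrow> 'a \<Rightarrow> 'a \<Rightarrow> 'a \<Rightarrow> 'a"
    and Lt mut Dl Du :: "nat \<Rightarrow> real"
    and E :: "nat \<Rightarrow> (nat \<times> nat) set" and B :: nat
    and c :: "nat \<Rightarrow> nat \<Rightarrow> nat \<Rightarrow> real" and cl :: real
    and alpha :: real
    and x xhat y :: "nat \<Rightarrow> nat \<Rightarrow> 'a" and phi :: "nat \<Rightarrow> nat \<Rightarrow> real"
    and \<nu> :: nat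
  defines "U \<equiv> (\<lambda>z. (\<Sum>i<m. f i z) / real m + G z)"
    and "HF \<equiv> (\<lambda>z v. (1 / real m) *\<^sub>R (\<Sum>i<m. Hf i z v))"
  assumes m_pos: "0 < m"
    \<comment> \<open>(A)\<close>
    and K_ne: "K \<noteq> {}" and K_closed: "closed K" and K_convex: "convex K"
    and O_open: "open Ob" and K_sub_O: "K \<subseteq> Ob"
    and f_grad: "\<And>i z. i < m \<Longrightarrow> z \<in> Ob \<Longrightarrow> (f i has_derivative (\<lambda>h. gradf i z \<bullet> h)) (at z)"
    and f_hess: "\<And>i z. i < m \<Longrightarrow> z \<in> Ob \<Longrightarrow> (gradf i has_derivative Hf i z) (at z)"
    and f_convex: "\<And>i. i < m \<Longrightarrow> convex_on Ob (f i)"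
    and mu_pos: "0 < mu"
    and HF_bounds: "\<And>z v. z \<in> K \<Longrightarrow> mu * (norm v)\<^sup>2 \<le> v \<bullet> HF z v \<and> v \<bullet> HF z v \<le> L * (norm v)\<^sup>2"
    and G_convex: "convex_on K G"
    and Hf_upper: "\<And>i z v. i < m \<Longrightarrow> z \<in> K \<Longrightarrow> v \<bullet> Hf i z v \<le> Li i * (norm v)\<^sup>2"
    \<comment> \<open>(B')\<close>
    and E_sub: "\<And>t. E t \<subseteq> {..<m} \<times> {..<m}"
    and B_pos: "0 < B"
    and B_conn: "\<And>n. strongly_connected_on m (\<Union>t\<in>{n * B ..< (Suc n) * B}. E t)"
    \<comment> \<open>(E)\<close>
    and cl_pos: "0 < cl"
    and c_diag: "\<And>t i. i < m \<Longrightarrow> c t i i \<ge> cl"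
    and c_edge: "\<And>t i j. i < m \<Longrightarrow> j < m \<Longrightarrow> (j, i) \<in> E t \<Longrightarrow> c t i j \<ge> cl"
    and c_zero: "\<And>t i j. i < m \<Longrightarrow> j < m \<Longrightarrow> i \<noteq> j \<Longrightarrow> (j, i) \<notin> E t \<Longrightarrow> c t i j = 0"
    and c_colstoch: "\<And>t j. j < m \<Longrightarrow> (\<Sum>i<m. c t i j) = 1"
    \<comment> \<open>(C)\<close>
    and ft_C2: "\<And>i. i < m \<Longrightarrow> C2_on (Ob \<times> Ob) (\<lambda>(u, w). ft i u w)"
    and ft_grad: "\<And>i u w. i < m \<Longrightarrow> u \<in> Ob \<Longrightarrow> w \<in> Ob \<Longrightarrow>
                    ((\<lambda>z. ft i z w) has_derivative (\<lambda>h. gradft i u w \<bullet> h)) (at u)"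
    and ft_hess: "\<And>i u w. i < m \<Longrightarrow> u \<in> Ob \<Longrightarrow> w \<in> Ob \<Longrightarrow>
                    ((\<lambda>z. gradft i z w) has_derivative Hft i u w) (at u)"
    and ft_consistent: "\<And>i z. i < m \<Longrightarrow> z \<in> K \<Longrightarrow> gradft i z z = gradf i z"
    and ft_lipschitz: "\<And>i w. i < m \<Longrightarrow> w \<in> K \<Longrightarrow> lipschitz_on (Lt i) K (\<lambda>z. gradft i z w)"
    and ft_strong: "\<And>i w. i < m \<Longrightarrow> w \<in> K \<Longrightarrow> strongly_convex_on K (mut i) (\<lambda>z. ft i z w)"
    and mut_pos: "\<And>i. i < m \<Longrightarrow> 0 < mut i"
    and D_le: "\<And>i. i < m \<Longrightarrow> Dl i \<le> Du i"
    and D_bounds: "\<And>i u w v. i < m \<Longrightarrow> u \<in> K \<Longrightarrow> w \<in> K \<Longrightarrow>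
                    Dl i * (norm v)\<^sup>2 \<le> v \<bullet> (Hft i u w v - HF u v) \<and>
                    v \<bullet> (Hft i u w v - HF u v) \<le> Du i * (norm v)\<^sup>2"
    \<comment> \<open>step-size\<close>
    and alpha_pos: "0 < alpha" and alpha_le1: "alpha \<le> 1"
    \<comment> \<open>SONATA iterates\<close>
    and x0: "\<And>i. i < m \<Longrightarrow> x 0 i \<in> K"
    and y0: "\<And>i. i < m \<Longrightarrow> y 0 i = gradf i (x 0 i)"
    and phi0: "\<And>i. i < m \<Longrightarrow> phi 0 i = 1"
    and xhat_def: "\<And>n i. i < m \<Longrightarrow> xhat n i \<in> K \<and>
        (\<forall>z\<in>K. ft i (xhat n i) (x n i) + (y n i - gradf i (x n i)) \<bullet> (xhat n i - x n i) + G (xhat n i)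
              \<le> ft i z (x n i) + (y n i - gradf i (x n i)) \<bullet> (z - x n i) + G z)"
    and phi_upd: "\<And>n i. i < m \<Longrightarrow> phi (Suc n) i = (\<Sum>j<m. c n i j * phi n j)"
    and x_upd: "\<And>n i. i < m \<Longrightarrow> x (Suc n) i =
        (1 / phi (Suc n) i) *\<^sub>R (\<Sum>j<m. (c n i j * phi n j) *\<^sub>R (x n j + alpha *\<^sub>R (xhat n j - x n j)))"
    and y_upd: "\<And>n i. i < m \<Longrightarrow> y (Suc n) i =
        (1 / phi (Suc n) i) *\<^sub>R (\<Sum>j<m. c n i j *\<^sub>R (phi n j *\<^sub>R y n j + gradf j (x (Suc n) j) - gradf j (x n j)))"
  shows "(\<Sum>i<m. (norm (xhat \<nu> i - x \<nu> i))\<^sup>2)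
     \<le> 6 / (mu * cl ^ (2 * (m - 1) * B)) *
         ((Max ((\<lambda>i. max \<bar>Dl i\<bar> \<bar>Du i\<bar>) ` {..<m}) / Min (mut ` {..<m}) + 1)\<^sup>2
          + 4 * (Max (Li ` {..<m}))\<^sup>2 / (Min (mut ` {..<m}))\<^sup>2)
         * (\<Sum>i<m. phi \<nu> i * (U (x \<nu> i) - Inf (U ` K)))
       + 3 / (Min (mut ` {..<m}))\<^sup>2 *
         (\<Sum>i<m. (norm (y \<nu> i - (1 / real m) *\<^sub>R (\<Sum>j<m. phi \<nu> j *\<^sub>R y \<nu> j)))\<^sup>2)"
proof -
  interpret sonata m E B c cl phi K Ob f gradf Hf HF G mu Li ft gradft Hft Lt mut Dl Du alpha x xhat y
  proof unfold_locales
    show "\<And>z v. z \<in> K \<Longrightarrow> mu * (norm v)\<^sup>2 \<le> v \<bullet> HF z v" using HF_bounds by blast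
  qed (fact assms HF_def[THEN meta_eq_to_obj_eq])+
  show ?thesis
    using sum_step_power2_le[of \<nu>]
    unfolding Dmax_def mumin_def Lmax_def phi_lb_def cp.Umin_def U_def F_def .
qed

end
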